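(* Let $\Delta$ be a nilpotent odd Laplacian on an antisymplectic supermanifold, let $\Psi$ be a Grassmann-odd function, let $\hbar$ be a constant, and let $W_i$ and $W_f$ be bosonic functions related by the finite $\Delta$-exact transformation $$e^{\frac{i}{\hbar} W_f}=e^{-[\Delta,\Psi]}\,e^{\frac{i}{\hbar} W_i}.$$ Then $$W_f=e^{{\rm ad}\Psi}W_i+(i\hbar)\,\frac{e^{{\rm ad}\Psi}-1}{{\rm ad}\Psi}\,\Delta\Psi ,$$ where $\frac{e^{x}-1}{x}=\sum_{n\ge0}\frac{x^n}{(n+1)!}$.
   Context: Coordinates $\Gamma^A$ have Grassmann parities $\epsilon_A$; the antibracket is $(F,G)=(\partial^r F/\partial\Gamma^A)E^{AB}(\partial^l G/\partial\Gamma^B)$ with $E^{AB}$ graded skew-symmetric ($E^{BA}=-(-1)^{(\epsilon_A+1)(\epsilon_B+1)}E^{AB}$) and satisfying the graded Jacobi identity. The odd Laplacian with measure density $\rho$ is $\Delta=\frac{(-1)^{\epsilon_A}}{2\rho}\frac{\partial^l}{\partial\Gamma^A}\rho E^{AB}\frac{\partial^l}{\partial\Gamma^B}$, assumed nilpotent: $\Delta^2=0$. $[A,B]=AB-(-1)^{\epsilon_A\epsilon_B}BA$ is the graded commutator, so $[\Delta,\Psi]$ is the operator $F\mapsto\Delta(\Psi F)+\Psi\Delta F$, and $e^{-[\Delta,\Psi]}$ is its exponential series. ${\rm ad}\Psi=(\Psi,\cdot)$, and $\Delta\Psi$ denotes $\Delta$ applied to the function $\Psi$. *)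

theory Defs
  imports "HOL-Analysis.Analysis" "HOL-Library.Function_Algebras"
begin

text \<open>An element of the complex Grassmann algebra on odd generators theta_0, theta_1, ...
  is represented by its coefficient function: a I is the coefficient of the ordered
  monomial theta_{i1} ... theta_{ik} (i1 < ... < ik, I = {i1,...,ik}).\<close>

type_synonym gr = "nat set \<Rightarrow> complex"

definition gsign :: "nat set \<Rightarrow> nat set \<Rightarrow> complex" where
  "gsign I J = (-1) ^ card {(i, j). i \<in> I \<and> j \<in> J \<and> j < i}"

definition gmult :: "gr \<Rightarrow> gr \<Rightarrow> gr" where
  "gmult a b = (\<lambda>K. \<Sum>I\<in>{I. I \<subseteq> K}. gsign I (K - I) * a I * b (K - I))"

definition gone :: gr where
  "gone = (\<lambda>I. if I = {} then 1 else 0)"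

definition gscale :: "complex \<Rightarrow> gr \<Rightarrow> gr" where
  "gscale c a = (\<lambda>I. c * a I)"

fun gpow :: "gr \<Rightarrow> nat \<Rightarrow> gr" where
  "gpow a 0 = gone"
| "gpow a (Suc k) = gmult a (gpow a k)"

definition gsoul :: "gr \<Rightarrow> gr" where
  "gsoul a = (\<lambda>I. if I = {} then 0 else a I)"

text \<open>Exponential and inverse of a Grassmann number with m generators
  (the soul part is nilpotent of order m+1, so the series terminate).\<close>
definition gexp :: "nat \<Rightarrow> gr \<Rightarrow> gr" where
  "gexp m a = gscale (exp (a {})) (\<Sum>k\<le>m. gscale (1 / fact k) (gpow (gsoul a) k))"

definition ginv :: "nat \<Rightarrow> gr \<Rightarrow> gr" where
  "ginv m a = gscale (1 / a {}) (\<Sum>k\<le>m. gpow (gscale (- 1 / a {}) (gsoul a)) k)"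

text \<open>A superfunction is a Grassmann-algebra-valued function of the even coordinates
  x in real^'n; the odd coordinates are theta_0..theta_(m-1).\<close>
type_synonym 'n sfun = "real^'n \<Rightarrow> gr"

definition pd :: "'n::finite \<Rightarrow> (real^'n \<Rightarrow> complex) \<Rightarrow> real^'n \<Rightarrow> complex" where
  "pd a f x = vector_derivative (\<lambda>s::real. f (x + s *\<^sub>R axis a 1)) (at 0)"

fun pds :: "'n::finite list \<Rightarrow> (real^'n \<Rightarrow> complex) \<Rightarrow> real^'n \<Rightarrow> complex" where
  "pds [] f = f"
| "pds (a # as) f = pd a (pds as f)"

definition smooth_on :: "(real^'n::finite) set \<Rightarrow> (real^'n \<Rightarrow> complex) \<Rightarrow> bool" where
  "smooth_on U f \<longleftrightarrow> (\<forall>as. pds as f differentiable_on U)"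

definition sfun :: "nat \<Rightarrow> (real^'n::finite) set \<Rightarrow> 'n sfun \<Rightarrow> bool" where
  "sfun m U F \<longleftrightarrow> (\<forall>x\<in>U. \<forall>I. F x I \<noteq> 0 \<longrightarrow> I \<subseteq> {..<m})
                 \<and> (\<forall>I. smooth_on U (\<lambda>x. F x I))"

definition homog :: "nat \<Rightarrow> (real^'n::finite) set \<Rightarrow> 'n sfun \<Rightarrow> bool" where
  "homog p U F \<longleftrightarrow> (\<forall>x\<in>U. \<forall>I. F x I \<noteq> 0 \<longrightarrow> card I mod 2 = p mod 2)"

definition smul :: "'n sfun \<Rightarrow> 'n sfun \<Rightarrow> 'n sfun" where
  "smul F G = (\<lambda>x. gmult (F x) (G x))"

text \<open>Coordinates Gamma^A: A = Inl a (even x^a) or Inr alpha (odd theta^alpha, alpha < m).\<close>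
definition idx :: "nat \<Rightarrow> ('n::finite + nat) set" where
  "idx m = range Inl \<union> Inr ` {..<m}"

fun eps :: "'n + nat \<Rightarrow> nat" where
  "eps (Inl _) = 0"
| "eps (Inr _) = 1"

definition dleft :: "'n::finite + nat \<Rightarrow> 'n sfun \<Rightarrow> 'n sfun" where
  "dleft A F = (case A of
      Inl a \<Rightarrow> (\<lambda>x J. pd a (\<lambda>y. F y J) x)
    | Inr \<alpha> \<Rightarrow> (\<lambda>x J. if \<alpha> \<in> J then 0
                     else (-1) ^ card {i\<in>J. i < \<alpha>} * F x (insert \<alpha> J)))"

definition dright :: "'n::finite + nat \<Rightarrow> 'n sfun \<Rightarrow> 'n sfun" where
  "dright A F = (case A of
      Inl a \<Rightarrow> (\<lambda>x J. pd a (\<lambda>y. F y J) x)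
    | Inr \<alpha> \<Rightarrow> (\<lambda>x J. if \<alpha> \<in> J then 0
                     else (-1) ^ card {i\<in>J. \<alpha> < i} * F x (insert \<alpha> J)))"

definition abr :: "nat \<Rightarrow> ('n::finite + nat \<Rightarrow> 'n + nat \<Rightarrow> 'n sfun)
                   \<Rightarrow> 'n sfun \<Rightarrow> 'n sfun \<Rightarrow> 'n sfun" where
  "abr m E F G = (\<lambda>x. \<Sum>A\<in>idx m. \<Sum>B\<in>idx m.
                     gmult (gmult (dright A F x) (E A B x)) (dleft B G x))"

definition Lap :: "nat \<Rightarrow> 'n::finite sfun \<Rightarrow> ('n + nat \<Rightarrow> 'n + nat \<Rightarrow> 'n sfun)
                   \<Rightarrow> 'n sfun \<Rightarrow> 'n sfun" where
  "Lap m \<rho> E F = (\<lambda>x. gmult (ginv m (\<rho> x))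
       (\<Sum>A\<in>idx m. \<Sum>B\<in>idx m. gscale ((-1) ^ eps A / 2)
          (dleft A (\<lambda>y. gmult (\<rho> y) (gmult (E A B y) (dleft B F y))) x)))"

text \<open>The operator [Delta, Psi] for odd Psi: F \<mapsto> Delta(Psi F) + Psi Delta F.\<close>
definition commLap :: "nat \<Rightarrow> 'n::finite sfun \<Rightarrow> ('n + nat \<Rightarrow> 'n + nat \<Rightarrow> 'n sfun)
                   \<Rightarrow> 'n sfun \<Rightarrow> 'n sfun \<Rightarrow> 'n sfun" where
  "commLap m \<rho> E \<Psi> F = (\<lambda>x. Lap m \<rho> E (smul \<Psi> F) x + smul \<Psi> (Lap m \<rho> E F) x)"

definition graded_jacobi :: "nat \<Rightarrow> (real^'n::finite) set \<Rightarrow> ('n + nat \<Rightarrow> 'n + nat \<Rightarrow> 'n sfun) \<Rightarrow> bool" where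
  "graded_jacobi m U E \<longleftrightarrow>
     (\<forall>F G H p q r. sfun m U F \<and> sfun m U G \<and> sfun m U H
        \<and> homog p U F \<and> homog q U G \<and> homog r U H \<longrightarrow>
        (\<forall>x\<in>U. gscale ((-1) ^ ((p + 1) * (r + 1))) (abr m E F (abr m E G H) x)
              + gscale ((-1) ^ ((q + 1) * (p + 1))) (abr m E G (abr m E H F) x)
              + gscale ((-1) ^ ((r + 1) * (q + 1))) (abr m E H (abr m E F G) x) = 0))"

definition antisymplectic :: "nat \<Rightarrow> (real^'n::finite) set \<Rightarrow> ('n + nat \<Rightarrow> 'n + nat \<Rightarrow> 'n sfun) \<Rightarrow> bool" where
  "antisymplectic m U E \<longleftrightarrow>
     (\<forall>A\<in>idx m. \<forall>B\<in>idx m. sfun m U (E A B) \<and> homog (eps A + eps B + 1) U (E A B)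
        \<and> (\<forall>x\<in>U. E B A x = gscale (- ((-1) ^ ((eps A + 1) * (eps B + 1)))) (E A B x)))
     \<and> graded_jacobi m U E
     \<and> (\<exists>Einv. \<forall>x\<in>U. \<forall>A\<in>idx m. \<forall>C\<in>idx m.
           (\<Sum>B\<in>idx m. gmult (E A B x) (Einv B C x)) = (if A = C then gone else 0))"

definition nilpotent_Lap :: "nat \<Rightarrow> (real^'n::finite) set \<Rightarrow> 'n sfun
                             \<Rightarrow> ('n + nat \<Rightarrow> 'n + nat \<Rightarrow> 'n sfun) \<Rightarrow> bool" where
  "nilpotent_Lap m U \<rho> E \<longleftrightarrow>
     (\<forall>F. sfun m U F \<longrightarrow> (\<forall>x\<in>U. Lap m \<rho> E (Lap m \<rho> E F) x = 0))"

text \<open>A series S represents sum_n t^n S n.\<close>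
definition sser_mult :: "(nat \<Rightarrow> 'n sfun) \<Rightarrow> (nat \<Rightarrow> 'n sfun) \<Rightarrow> nat \<Rightarrow> 'n sfun" where
  "sser_mult P Q = (\<lambda>n x. \<Sum>i\<le>n. gmult (P i x) (Q (n - i) x))"

fun sser_pow :: "(nat \<Rightarrow> 'n sfun) \<Rightarrow> nat \<Rightarrow> nat \<Rightarrow> 'n sfun" where
  "sser_pow P 0 = (\<lambda>n x. if n = 0 then gone else 0)"
| "sser_pow P (Suc k) = sser_mult P (sser_pow P k)"

text \<open>exp(W) = exp(W_0) * sum_k (W - W_0)^k / k!, computed coefficientwise
  (only k \<le> n contributes to the t^n coefficient).\<close>
definition sser_exp :: "nat \<Rightarrow> (nat \<Rightarrow> 'n sfun) \<Rightarrow> nat \<Rightarrow> 'n sfun" where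
  "sser_exp m W = (\<lambda>n x. gmult (gexp m (W 0 x))
      (\<Sum>k\<le>n. gscale (1 / fact k) (sser_pow (\<lambda>j. if j = 0 then (\<lambda>_. 0) else W j) k n x)))"

end

theory Submission
  imports Defs
begin

text \<open>
  View the transformation as a formal power series in a parameter \<open>t\<close> and put
  \<open>X = (i/\<hbar>) W\<^sub>f\<close>, \<open>e = exp X\<close>. For odd \<open>\<Psi>\<close> the graded Leibniz rules give
  \<open>[\<Delta>, \<Psi>] F = (\<Delta>\<Psi>) F - (\<Psi>, F)\<close>, so the transformation law says \<open>e' = (ad \<Psi>) e - (\<Delta>\<Psi>) e\<close>.
  Since \<open>ad \<Psi>\<close> is a derivation and \<open>X\<close> is even, \<open>(ad \<Psi>) e = ((ad \<Psi>) X) e\<close> and \<open>e' = X' e\<close>;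
  cancelling the invertible factor \<open>e\<close> leaves \<open>X' = (ad \<Psi>) X - \<Delta>\<Psi>\<close>. This is a triangular
  recursion for the coefficients of \<open>X\<close>, whose solution with \<open>X(0) = (i/\<hbar>) W\<^sub>i\<close> is
  \<open>e\<^bsup>t ad \<Psi>\<^esup> X(0) - ((e\<^bsup>t ad \<Psi>\<^esup> - 1) / ad \<Psi>) \<Delta>\<Psi>\<close>.
\<close>

section \<open>The Grassmann algebra\<close>

lemma sum_apply: "(\<Sum>k\<in>A. f k) x = (\<Sum>k\<in>A. f k x :: 'a::comm_monoid_add)"
  by (induction A rule: infinite_finite_induct) auto

definition inversions :: "nat set \<Rightarrow> nat set \<Rightarrow> nat" where
  "inversions I J = card {(i, j). i \<in> I \<and> j \<in> J \<and> j < i}"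

lemma gsign_inversions: "gsign I J = (-1) ^ inversions I J"
  by (simp add: gsign_def inversions_def)

lemma finite_inversion_pairs:
  "finite I \<Longrightarrow> finite J \<Longrightarrow> finite {(i, j). i \<in> I \<and> j \<in> J \<and> P i j}"
  by (rule finite_subset[of _ "I \<times> J"]) auto

lemma inversions_Un_left:
  assumes "finite I" "finite J" "finite L" "I \<inter> J = {}"
  shows "inversions (I \<union> J) L = inversions I L + inversions J L"
proof -
  have "{(i, j). i \<in> I \<union> J \<and> j \<in> L \<and> j < i} =
     {(i, j). i \<in> I \<and> j \<in> L \<and> j < i} \<union> {(i, j). i \<in> J \<and> j \<in> L \<and> j < i}" by auto
  then show ?thesis unfolding inversions_def
    using assms by (simp add: card_Un_disjoint finite_inversion_pairs disjoint_iff)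
qed

lemma inversions_Un_right:
  assumes "finite I" "finite J" "finite L" "J \<inter> L = {}"
  shows "inversions I (J \<union> L) = inversions I J + inversions I L"
proof -
  have "{(i, j). i \<in> I \<and> j \<in> J \<union> L \<and> j < i} =
     {(i, j). i \<in> I \<and> j \<in> J \<and> j < i} \<union> {(i, j). i \<in> I \<and> j \<in> L \<and> j < i}" by auto
  then show ?thesis unfolding inversions_def
    using assms by (simp add: card_Un_disjoint finite_inversion_pairs disjoint_iff)
qed

lemma inversions_swap:
  assumes "finite I" "finite J" "I \<inter> J = {}"
  shows "inversions I J + inversions J I = card I * card J"
proof -
  have "inversions J I = card {(i, j). i \<in> I \<and> j \<in> J \<and> i < j}"
    unfolding inversions_def
    by (rule bij_betw_same_card[of "\<lambda>(a, b). (b, a)"]) (auto simp: bij_betw_def inj_on_def image_def)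
  moreover have "I \<times> J = {(i, j). i \<in> I \<and> j \<in> J \<and> j < i} \<union> {(i, j). i \<in> I \<and> j \<in> J \<and> i < j}"
    using assms(3) by auto
  moreover have "card ({(i, j). i \<in> I \<and> j \<in> J \<and> j < i} \<union> {(i, j). i \<in> I \<and> j \<in> J \<and> i < j})
     = card {(i, j). i \<in> I \<and> j \<in> J \<and> j < i} + card {(i, j). i \<in> I \<and> j \<in> J \<and> i < j}"
    by (rule card_Un_disjoint) (use assms in \<open>auto simp: finite_inversion_pairs\<close>)
  ultimately show ?thesis unfolding inversions_def by (metis card_cartesian_product)
qed

lemma gsign_Un_left:
  "finite I \<Longrightarrow> finite J \<Longrightarrow> finite L \<Longrightarrow> I \<inter> J = {} \<Longrightarrow>
   gsign (I \<union> J) L = gsign I L * gsign J L"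
  by (simp add: gsign_inversions inversions_Un_left power_add)

lemma gsign_Un_right:
  "finite I \<Longrightarrow> finite J \<Longrightarrow> finite L \<Longrightarrow> J \<inter> L = {} \<Longrightarrow>
   gsign I (J \<union> L) = gsign I J * gsign I L"
  by (simp add: gsign_inversions inversions_Un_right power_add)

lemma gsign_square: "gsign I J * gsign I J = 1"
  by (simp add: gsign_inversions power_add[symmetric] flip: mult_2)

lemma gsign_commute:
  "finite I \<Longrightarrow> finite J \<Longrightarrow> I \<inter> J = {} \<Longrightarrow>
   gsign I J = (-1) ^ (card I * card J) * gsign J I"
proof -
  assume "finite I" "finite J" "I \<inter> J = {}"
  then have "gsign I J * gsign J I = (-1) ^ (card I * card J)"
    by (simp add: gsign_inversions inversions_swap power_add[symmetric])
  then show ?thesis using gsign_square[of J I] by (metis mult.assoc mult.right_neutral)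
qed

lemma gsign_empty_left [simp]: "gsign {} J = 1"
  and gsign_empty_right [simp]: "gsign I {} = 1"
  by (simp_all add: gsign_def)

lemma gmult_Pow: "gmult a b K = (\<Sum>I\<in>Pow K. gsign I (K - I) * a I * b (K - I))"
  by (simp add: gmult_def Pow_def)

lemma gmult_infinite: "infinite K \<Longrightarrow> gmult a b K = 0"
  by (simp add: gmult_Pow)

lemma sum_Pow_Pow_reindex:
  assumes "finite K"
  shows "(\<Sum>L\<in>Pow K. \<Sum>I\<in>Pow L. f I (L - I) (K - L)) =
         (\<Sum>I\<in>Pow K. \<Sum>J\<in>Pow (K - I). f I J (K - I - J))"
proof -
  have "(\<Sum>L\<in>Pow K. \<Sum>I\<in>Pow L. f I (L - I) (K - L)) =
        (\<Sum>L\<in>Pow K. \<Sum>I\<in>{I \<in> Pow K. I \<subseteq> L}. f I (L - I) (K - L))"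
    by (rule sum.cong) (auto intro!: sum.cong)
  also have "\<dots> = (\<Sum>I\<in>Pow K. \<Sum>L | L \<in> Pow K \<and> I \<subseteq> L. f I (L - I) (K - L))"
    by (rule sum.swap_restrict) (use assms in auto)
  also have "\<dots> = (\<Sum>I\<in>Pow K. \<Sum>J\<in>Pow (K - I). f I J (K - I - J))"
  proof (rule sum.cong[OF refl])
    fix I assume I: "I \<in> Pow K"
    show "(\<Sum>L | L \<in> Pow K \<and> I \<subseteq> L. f I (L - I) (K - L)) = (\<Sum>J\<in>Pow (K - I). f I J (K - I - J))"
    proof (rule sum.reindex_bij_witness[of _ "\<lambda>J. I \<union> J" "\<lambda>L. L - I"])
      fix L assume "L \<in> {L \<in> Pow K. I \<subseteq> L}"
      then have "K - I - (L - I) = K - L" by auto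
      then show "f I (L - I) (K - I - (L - I)) = f I (L - I) (K - L)" by simp
    qed (use I in auto)
  qed
  finally show ?thesis .
qed

lemma gsign_assoc:
  assumes "finite K" "I \<subseteq> K" "J \<subseteq> K - I"
  shows "gsign (I \<union> J) (K - I - J) * gsign I J = gsign I (K - I) * gsign J (K - I - J)"
proof -
  have fin: "finite I" "finite J" "finite (K - I - J)"
    using assms by (auto dest: finite_subset)
  have "K - I = J \<union> (K - I - J)" using assms(3) by auto
  then have "gsign I (K - I) = gsign I J * gsign I (K - I - J)"
    using gsign_Un_right[OF fin] by auto
  moreover have "gsign (I \<union> J) (K - I - J) = gsign I (K - I - J) * gsign J (K - I - J)"
    using gsign_Un_left[OF fin(1,2)] fin(3) assms(3) by auto
  ultimately show ?thesis by (simp add: algebra_simps)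
qed

lemma gmult_assoc: "gmult (gmult a b) c = gmult a (gmult b c)"
proof
  fix K
  show "gmult (gmult a b) c K = gmult a (gmult b c) K"
  proof (cases "finite K")
    case False then show ?thesis by (simp add: gmult_infinite)
  next
    case fin: True
    have "gmult (gmult a b) c K = (\<Sum>L\<in>Pow K. \<Sum>I\<in>Pow L.
        gsign (I \<union> (L - I)) (K - L) * gsign I (L - I) * a I * b (L - I) * c (K - L))"
      unfolding gmult_Pow[of "gmult a b"]
      by (rule sum.cong[OF refl])
         (auto simp: gmult_Pow sum_distrib_left sum_distrib_right mult.assoc Un_absorb1
           intro!: sum.cong)
    also have "\<dots> = (\<Sum>I\<in>Pow K. \<Sum>J\<in>Pow (K - I).
        gsign (I \<union> J) (K - I - J) * gsign I J * a I * b J * c (K - I - J))"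
      by (rule sum_Pow_Pow_reindex[OF fin])
    also have "\<dots> = (\<Sum>I\<in>Pow K. \<Sum>J\<in>Pow (K - I).
        gsign I (K - I) * gsign J (K - I - J) * a I * b J * c (K - I - J))"
      by (intro sum.cong refl) (simp add: gsign_assoc[OF fin])
    also have "\<dots> = gmult a (gmult b c) K"
      unfolding gmult_Pow[of a]
      by (rule sum.cong[OF refl]) (auto simp: gmult_Pow sum_distrib_left mult.assoc mult.left_commute)
    finally show ?thesis .
  qed
qed

lemma gscale_apply [simp]: "gscale c a I = c * a I"
  by (simp add: gscale_def)

lemma gmult_add_left: "gmult (a + b) c = gmult a c + gmult b c"
  and gmult_add_right: "gmult a (b + c) = gmult a b + gmult a c"
  and gmult_diff_left: "gmult (a - b) c = gmult a c - gmult b c"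
  and gmult_diff_right: "gmult a (b - c) = gmult a b - gmult a c"
  by (rule ext; simp add: gmult_Pow algebra_simps sum.distrib sum_subtractf)+

lemma gmult_zero_left [simp]: "gmult 0 c = 0"
  and gmult_zero_right [simp]: "gmult a 0 = 0"
  by (rule ext; simp add: gmult_Pow)+

lemma gmult_scale_left: "gmult (gscale c a) b = gscale c (gmult a b)"
  and gmult_scale_right: "gmult a (gscale c b) = gscale c (gmult a b)"
  by (rule ext; simp add: gmult_Pow sum_distrib_left mult_ac)+

lemma gmult_sum_left: "gmult (\<Sum>k\<in>A. f k) c = (\<Sum>k\<in>A. gmult (f k) c)"
proof
  fix K
  have "gmult (\<Sum>k\<in>A. f k) c K = (\<Sum>I\<in>Pow K. \<Sum>k\<in>A. gsign I (K - I) * f k I * c (K - I))"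
    by (simp add: gmult_Pow sum_apply sum_distrib_left sum_distrib_right)
  also have "\<dots> = (\<Sum>k\<in>A. gmult (f k) c) K"
    by (subst sum.swap) (simp add: gmult_Pow sum_apply)
  finally show "gmult (\<Sum>k\<in>A. f k) c K = (\<Sum>k\<in>A. gmult (f k) c) K" .
qed

lemma gmult_sum_right: "gmult c (\<Sum>k\<in>A. f k) = (\<Sum>k\<in>A. gmult c (f k))"
proof
  fix K
  have "gmult c (\<Sum>k\<in>A. f k) K = (\<Sum>I\<in>Pow K. \<Sum>k\<in>A. gsign I (K - I) * c I * f k (K - I))"
    by (simp add: gmult_Pow sum_apply sum_distrib_left sum_distrib_right)
  also have "\<dots> = (\<Sum>k\<in>A. gmult c (f k)) K"
    by (subst sum.swap) (simp add: gmult_Pow sum_apply)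
  finally show "gmult c (\<Sum>k\<in>A. f k) K = (\<Sum>k\<in>A. gmult c (f k)) K" .
qed

lemma gscale_add: "gscale c (a + b) = gscale c a + gscale c b"
  and gscale_diff: "gscale c (a - b) = gscale c a - gscale c b"
  and gscale_add_left: "gscale (c + d) a = gscale c a + gscale d a"
  by (rule ext; simp add: algebra_simps)+

lemma gscale_gscale [simp]: "gscale c (gscale d a) = gscale (c * d) a"
  and gscale_one [simp]: "gscale 1 a = a"
  and gscale_zero [simp]: "gscale 0 a = 0" "gscale c 0 = 0"
  by (rule ext; simp)+

lemma gscale_sum: "gscale c (\<Sum>k\<in>A. f k) = (\<Sum>k\<in>A. gscale c (f k))"
  by (rule ext) (simp add: sum_apply sum_distrib_left)

lemma gscale_cancel:
  assumes "c \<noteq> 0" "gscale c a = gscale c b"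
  shows "a = b"
  using arg_cong[OF assms(2), of "gscale (1 / c)"] assms(1) by simp

lemma fact_Suc_divide: "of_nat (Suc l) * (c / fact (Suc l)) = (c / fact l :: 'a::field_char_0)"
  by (simp add: field_simps del: of_nat_Suc)

lemma gscale_fact_Suc: "gscale (1 / fact (Suc k)) (gscale (of_nat (Suc k)) z) = gscale (1 / fact k) z"
  unfolding gscale_gscale mult.commute[of "1 / fact (Suc k)"] fact_Suc_divide ..

lemmas gmult_simps = gmult_add_left gmult_add_right gmult_scale_left gmult_scale_right gmult_assoc
  gmult_diff_left gmult_diff_right gscale_add gscale_diff gscale_gscale

lemma gmult_empty: "gmult a b {} = a {} * b {}"
  by (simp add: gmult_Pow)

lemma gpow_empty: "gpow a k {} = a {} ^ k"
  by (induction k) (auto simp: gmult_empty gone_def)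

definition gr_parity :: "nat \<Rightarrow> gr \<Rightarrow> bool" where
  "gr_parity p a \<longleftrightarrow> (\<forall>I. a I \<noteq> 0 \<longrightarrow> card I mod 2 = p mod 2)"

definition gr_supp :: "nat \<Rightarrow> gr \<Rightarrow> bool" where
  "gr_supp m a \<longleftrightarrow> (\<forall>I. a I \<noteq> 0 \<longrightarrow> I \<subseteq> {..<m})"

definition gr_order :: "nat \<Rightarrow> gr \<Rightarrow> bool" where
  "gr_order d a \<longleftrightarrow> (\<forall>I. a I \<noteq> 0 \<longrightarrow> d \<le> card I)"

text \<open>\<open>gmult\<close> discards the coefficients on infinite index sets, so \<open>gone\<close> is a unit only
  for Grassmann numbers without such coefficients.\<close>

definition gr_finite :: "gr \<Rightarrow> bool" where
  "gr_finite a \<longleftrightarrow> (\<forall>K. infinite K \<longrightarrow> a K = 0)"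

lemma gr_parity_sign:
  assumes "gr_parity p a" "a I \<noteq> 0"
  shows "(-1::complex) ^ card I = (-1) ^ p"
proof -
  have "card I mod 2 = p mod 2" using assms by (simp add: gr_parity_def)
  then show ?thesis by (simp add: minus_one_power_iff even_iff_mod_2_eq_zero)
qed

lemma gr_parity_mod: "p mod 2 = q mod 2 \<Longrightarrow> gr_parity p a = gr_parity q a"
  by (simp add: gr_parity_def)

lemma gr_supp_finite: "gr_supp m a \<Longrightarrow> a I \<noteq> 0 \<Longrightarrow> finite I"
  unfolding gr_supp_def by (meson finite_lessThan finite_subset)

lemma gr_supp_imp_finite: "gr_supp m a \<Longrightarrow> gr_finite a"
  by (auto simp: gr_finite_def dest: gr_supp_finite)

lemma add_nonzero_cases: "x + y \<noteq> 0 \<Longrightarrow> x \<noteq> 0 \<or> (y :: 'a::monoid_add) \<noteq> 0"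
  by auto

lemma gr_parity_add: "gr_parity p a \<Longrightarrow> gr_parity p b \<Longrightarrow> gr_parity p (a + b)"
  and gr_supp_add: "gr_supp m a \<Longrightarrow> gr_supp m b \<Longrightarrow> gr_supp m (a + b)"
  and gr_finite_add: "gr_finite a \<Longrightarrow> gr_finite b \<Longrightarrow> gr_finite (a + b)"
  by (auto simp: gr_parity_def gr_supp_def gr_finite_def dest: add_nonzero_cases)

lemma gr_parity_zero: "gr_parity p 0"
  and gr_supp_zero: "gr_supp m 0"
  and gr_finite_zero: "gr_finite 0"
  by (simp_all add: gr_parity_def gr_supp_def gr_finite_def)

lemma gr_parity_scale: "gr_parity p a \<Longrightarrow> gr_parity p (gscale c a)"
  and gr_supp_scale: "gr_supp m a \<Longrightarrow> gr_supp m (gscale c a)"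
  and gr_order_scale: "gr_order d a \<Longrightarrow> gr_order d (gscale c a)"
  and gr_finite_scale: "gr_finite a \<Longrightarrow> gr_finite (gscale c a)"
  by (simp_all add: gr_parity_def gr_supp_def gr_order_def gr_finite_def)

lemma gr_parity_sum: "(\<And>k. k \<in> A \<Longrightarrow> gr_parity p (f k)) \<Longrightarrow> gr_parity p (\<Sum>k\<in>A. f k)"
  by (induction A rule: infinite_finite_induct) (auto simp: gr_parity_zero gr_parity_add)

lemma gr_supp_sum: "(\<And>k. k \<in> A \<Longrightarrow> gr_supp m (f k)) \<Longrightarrow> gr_supp m (\<Sum>k\<in>A. f k)"
  by (induction A rule: infinite_finite_induct) (auto simp: gr_supp_zero gr_supp_add)

lemma gr_finite_sum: "(\<And>k. k \<in> A \<Longrightarrow> gr_finite (f k)) \<Longrightarrow> gr_finite (\<Sum>k\<in>A. f k)"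
  by (simp add: gr_finite_def sum_apply)

lemma gmult_nonzero:
  assumes "gmult a b K \<noteq> 0"
  obtains I where "finite K" "I \<subseteq> K" "a I \<noteq> 0" "b (K - I) \<noteq> 0"
proof -
  have "finite K" using assms gmult_infinite by metis
  moreover from assms obtain I where "I \<in> Pow K" "gsign I (K - I) * a I * b (K - I) \<noteq> 0"
    unfolding gmult_Pow by (meson sum.not_neutral_contains_not_neutral)
  ultimately show ?thesis using that by auto
qed

lemma card_split: "finite K \<Longrightarrow> I \<subseteq> K \<Longrightarrow> card K = card I + card (K - I)"
  by (metis card_Diff_subset card_mono finite_subset le_add_diff_inverse)

lemma gr_parity_gmult:
  assumes "gr_parity p a" "gr_parity q b"
  shows "gr_parity (p + q) (gmult a b)"
  unfolding gr_parity_def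
proof (intro allI impI)
  fix K assume "gmult a b K \<noteq> 0"
  then obtain I where "finite K" "I \<subseteq> K" "a I \<noteq> 0" "b (K - I) \<noteq> 0" by (rule gmult_nonzero)
  with assms show "card K mod 2 = (p + q) mod 2"
    unfolding gr_parity_def card_split[OF \<open>finite K\<close> \<open>I \<subseteq> K\<close>] by (metis mod_add_eq)
qed

lemma gr_supp_gmult:
  assumes "gr_supp m a" "gr_supp m b"
  shows "gr_supp m (gmult a b)"
  unfolding gr_supp_def
proof (intro allI impI)
  fix K assume "gmult a b K \<noteq> 0"
  then obtain I where "I \<subseteq> K" "a I \<noteq> 0" "b (K - I) \<noteq> 0" by (rule gmult_nonzero)
  with assms show "K \<subseteq> {..<m}" unfolding gr_supp_def by blast
qed

lemma gr_order_gmult: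
  assumes "gr_order d a" "gr_order e b"
  shows "gr_order (d + e) (gmult a b)"
  unfolding gr_order_def
proof (intro allI impI)
  fix K assume "gmult a b K \<noteq> 0"
  then obtain I where "finite K" "I \<subseteq> K" "a I \<noteq> 0" "b (K - I) \<noteq> 0" by (rule gmult_nonzero)
  with assms show "d + e \<le> card K"
    unfolding gr_order_def card_split[OF \<open>finite K\<close> \<open>I \<subseteq> K\<close>] by (simp add: add_mono)
qed

lemma gr_finite_gmult: "gr_finite (gmult a b)"
  by (simp add: gr_finite_def gmult_infinite)

lemma gr_parity_gone: "gr_parity 0 gone"
  and gr_supp_gone: "gr_supp m gone"
  and gr_order_gone: "gr_order 0 gone"
  by (simp_all add: gr_parity_def gr_supp_def gr_order_def gone_def)

lemma gr_parity_gpow: "gr_parity 0 a \<Longrightarrow> gr_parity 0 (gpow a k)"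
  by (induction k) (auto simp: gr_parity_gone dest: gr_parity_gmult)

lemma gr_supp_gpow: "gr_supp m a \<Longrightarrow> gr_supp m (gpow a k)"
  by (induction k) (auto simp: gr_supp_gone gr_supp_gmult)

lemma gr_order_gpow: "gr_order d a \<Longrightarrow> gr_order (k * d) (gpow a k)"
  by (induction k) (auto simp: gr_order_gone gr_order_gmult)

lemma gr_parity_gsoul: "gr_parity p a \<Longrightarrow> gr_parity p (gsoul a)"
  and gr_supp_gsoul: "gr_supp m a \<Longrightarrow> gr_supp m (gsoul a)"
  by (simp_all add: gr_parity_def gr_supp_def gsoul_def)

lemma gr_order_gsoul: "gr_supp m a \<Longrightarrow> gr_order 1 (gsoul a)"
  by (auto simp: gr_order_def gsoul_def Suc_le_eq card_gt_0_iff dest: gr_supp_finite)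

lemma gpow_eq_0:
  assumes "gr_supp m a" "gr_order 1 a" "m < k"
  shows "gpow a k = 0"
proof
  fix I
  show "gpow a k I = 0 I"
  proof (rule ccontr)
    assume "gpow a k I \<noteq> 0 I"
    then have "k \<le> card I" "I \<subseteq> {..<m}"
      using gr_order_gpow[OF assms(2), of k] gr_supp_gpow[OF assms(1), of k]
      by (simp_all add: gr_order_def gr_supp_def)
    then show False using assms(3) card_mono[OF finite_lessThan, of I m] by simp
  qed
qed

lemma gmult_gone_left: "gr_finite a \<Longrightarrow> gmult gone a = a"
proof
  fix K assume fin: "gr_finite a"
  show "gmult gone a K = a K"
  proof (cases "finite K")
    case True
    have "gmult gone a K = (\<Sum>I\<in>{{}}. gsign I (K - I) * gone I * a (K - I))"
      unfolding gmult_Pow by (rule sum.mono_neutral_right) (use True in \<open>auto simp: gone_def\<close>)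
    then show ?thesis by (simp add: gone_def)
  qed (use fin in \<open>simp add: gr_finite_def gmult_infinite\<close>)
qed

lemma gmult_gone_right: "gr_finite a \<Longrightarrow> gmult a gone = a"
proof
  fix K assume fin: "gr_finite a"
  show "gmult a gone K = a K"
  proof (cases "finite K")
    case True
    have "gmult a gone K = (\<Sum>I\<in>{K}. gsign I (K - I) * a I * gone (K - I))"
      unfolding gmult_Pow by (rule sum.mono_neutral_right) (use True in \<open>auto simp: gone_def\<close>)
    then show ?thesis by (simp add: gone_def)
  qed (use fin in \<open>simp add: gr_finite_def gmult_infinite\<close>)
qed

lemma gmult_gone_commute: "gmult a gone = gmult gone a"
proof
  fix K
  show "gmult a gone K = gmult gone a K"
  proof (cases "finite K")
    case True
    have "gmult a gone K = (\<Sum>I\<in>{K}. gsign I (K - I) * a I * gone (K - I))"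
      unfolding gmult_Pow by (rule sum.mono_neutral_right) (use True in \<open>auto simp: gone_def\<close>)
    moreover have "gmult gone a K = (\<Sum>I\<in>{{}}. gsign I (K - I) * gone I * a (K - I))"
      unfolding gmult_Pow by (rule sum.mono_neutral_right) (use True in \<open>auto simp: gone_def\<close>)
    ultimately show ?thesis by (simp add: gone_def)
  qed (simp add: gmult_infinite)
qed

lemma gpow_Suc_right: "gpow a (Suc k) = gmult (gpow a k) a"
proof (induction k)
  case (Suc k)
  have "gpow a (Suc (Suc k)) = gmult a (gmult (gpow a k) a)" using Suc by simp
  also have "\<dots> = gmult (gpow a (Suc k)) a" by (simp add: gmult_assoc)
  finally show ?case .
qed (simp add: gmult_gone_commute)

lemma gmult_commute_sign:
  assumes "\<And>I J. a I \<noteq> 0 \<Longrightarrow> b J \<noteq> 0 \<Longrightarrow> finite I \<Longrightarrow> finite J \<Longrightarrow>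
        (-1::complex) ^ (card I * card J) = s"
  shows "gmult a b = gscale s (gmult b a)"
proof
  fix K
  show "gmult a b K = gscale s (gmult b a) K"
  proof (cases "finite K")
    case True
    have ba: "gmult b a K = (\<Sum>I\<in>Pow K. gsign (K - I) I * b (K - I) * a I)"
      unfolding gmult_Pow
      by (rule sum.reindex_bij_witness[of _ "\<lambda>I. K - I" "\<lambda>I. K - I"]) (auto simp: double_diff)
    show ?thesis
      unfolding gscale_apply gmult_Pow[of a b] ba sum_distrib_left
    proof (intro sum.cong refl)
      fix I assume "I \<in> Pow K"
      then have fin: "finite I" "finite (K - I)" using True by (auto dest: finite_subset)
      show "gsign I (K - I) * a I * b (K - I) = s * (gsign (K - I) I * b (K - I) * a I)"
      proof (cases "a I \<noteq> 0 \<and> b (K - I) \<noteq> 0")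
        case True
        then have "(-1::complex) ^ (card I * card (K - I)) = s" using assms fin by blast
        then show ?thesis using gsign_commute[of I "K - I"] fin by simp
      qed auto
    qed
  qed (simp add: gmult_infinite)
qed

lemma gmult_commute_parity:
  assumes "gr_parity p a" "gr_parity q b"
  shows "gmult a b = gscale ((-1) ^ (p * q)) (gmult b a)"
proof (rule gmult_commute_sign)
  fix I J assume "a I \<noteq> 0" "b J \<noteq> 0"
  then have "(-1::complex) ^ card I = (-1) ^ p" "(-1::complex) ^ card J = (-1) ^ q"
    using assms by (auto intro: gr_parity_sign)
  then show "(-1::complex) ^ (card I * card J) = (-1) ^ (p * q)"
    by (metis power_mult power_mult_distrib mult.commute)
qed

lemma gmult_commute_even:
  assumes "gr_parity 0 a"
  shows "gmult a b = gmult b a" "gmult b a = gmult a b"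
  using gmult_commute_sign[of a b 1] gr_parity_sign[OF assms] by (auto simp: power_mult)

lemma ginv_left:
  assumes s: "gr_supp m a" and nz: "a {} \<noteq> 0"
  shows "gmult (ginv m a) a = gone"
proof -
  define c where "c = a {}"
  define u where "u = gscale (- 1 / c) (gsoul a)"
  have a: "a = gscale c (gone - u)"
    unfolding u_def c_def using nz by (intro ext) (simp add: gone_def gsoul_def)
  have su: "gr_supp m u" unfolding u_def by (intro gr_supp_scale gr_supp_gsoul s)
  have du: "gr_order 1 u" unfolding u_def by (intro gr_order_scale gr_order_gsoul[OF s])
  have "ginv m a = gscale (1 / c) (\<Sum>k\<le>m. gpow u k)"
    unfolding ginv_def u_def c_def ..
  then have "gmult (ginv m a) a = gscale (1 / c) (gscale c (\<Sum>k\<le>m. gmult (gpow u k) (gone - u)))"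
    by (subst (2) a) (simp only: gmult_scale_left gmult_scale_right gmult_sum_left gscale_gscale mult.commute)
  also have "\<dots> = (\<Sum>k\<le>m. gpow u k - gpow u (Suc k))"
    using nz unfolding c_def
    by (simp add: gmult_diff_right gmult_gone_right gr_supp_imp_finite[OF gr_supp_gpow[OF su]]
        gpow_Suc_right[symmetric])
  also have "\<dots> = gone"
    using gpow_eq_0[OF su du, of "Suc m"] by (subst sum_telescope) simp
  finally show ?thesis .
qed

lemma gr_parity_ginv: "gr_parity 0 a \<Longrightarrow> gr_parity 0 (ginv m a)"
  unfolding ginv_def by (intro gr_parity_scale gr_parity_sum gr_parity_gpow gr_parity_gsoul)

lemma gmult_cancel_right:
  assumes "gr_supp m g" "g {} \<noteq> 0" "gr_parity 0 g" "gmult a g = gmult b g"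
    "gr_finite a" "gr_finite b"
  shows "a = b"
proof -
  have "gmult g (ginv m g) = gone"
    using ginv_left[OF assms(1,2)] gmult_commute_even(1)[OF assms(3)] by simp
  then have "gmult (gmult a g) (ginv m g) = a" "gmult (gmult b g) (ginv m g) = b"
    using assms(5,6) by (simp_all add: gmult_assoc gmult_gone_right)
  then show ?thesis using assms(4) by metis
qed

lemma gexp_empty: "gexp m a {} = exp (a {})"
proof -
  have "(\<Sum>k\<le>m. (0::complex) ^ k / fact k) = 1" by (induction m) auto
  then show ?thesis by (simp add: gexp_def sum_apply gpow_empty gsoul_def)
qed

lemma gr_supp_gexp: "gr_supp m a \<Longrightarrow> gr_supp m (gexp m a)"
  unfolding gexp_def by (intro gr_supp_scale gr_supp_sum gr_supp_gpow gr_supp_gsoul)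

lemma gr_parity_gexp: "gr_parity 0 a \<Longrightarrow> gr_parity 0 (gexp m a)"
  unfolding gexp_def by (intro gr_parity_scale gr_parity_sum gr_parity_gpow gr_parity_gsoul)

section \<open>Derivatives with respect to an odd generator\<close>

definition sign_below :: "nat \<Rightarrow> nat set \<Rightarrow> complex" where
  "sign_below \<alpha> J = (-1) ^ card {i\<in>J. i < \<alpha>}"

definition sign_above :: "nat \<Rightarrow> nat set \<Rightarrow> complex" where
  "sign_above \<alpha> J = (-1) ^ card {i\<in>J. \<alpha> < i}"

definition gdiff_left :: "nat \<Rightarrow> gr \<Rightarrow> gr" where
  "gdiff_left \<alpha> a = (\<lambda>J. if \<alpha> \<in> J then 0 else sign_below \<alpha> J * a (insert \<alpha> J))"

definition gdiff_right :: "nat \<Rightarrow> gr \<Rightarrow> gr" where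
  "gdiff_right \<alpha> a = (\<lambda>J. if \<alpha> \<in> J then 0 else sign_above \<alpha> J * a (insert \<alpha> J))"

lemma sign_below_square: "sign_below \<alpha> J * sign_below \<alpha> J = 1"
  by (simp add: sign_below_def power_add[symmetric] flip: mult_2)

lemma sign_below_Un:
  assumes "finite I" "finite L" "I \<inter> L = {}"
  shows "sign_below \<alpha> (I \<union> L) = sign_below \<alpha> I * sign_below \<alpha> L"
proof -
  have "{i \<in> I \<union> L. i < \<alpha>} = {i\<in>I. i < \<alpha>} \<union> {i\<in>L. i < \<alpha>}" by auto
  moreover have "card ({i\<in>I. i < \<alpha>} \<union> {i\<in>L. i < \<alpha>}) = card {i\<in>I. i < \<alpha>} + card {i\<in>L. i < \<alpha>}"
    by (rule card_Un_disjoint) (use assms in auto)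
  ultimately show ?thesis by (simp add: sign_below_def power_add)
qed

lemma sign_below_above:
  assumes "finite I" "\<alpha> \<notin> I"
  shows "sign_below \<alpha> I * sign_above \<alpha> I = (-1) ^ card I"
proof -
  have "I = {i\<in>I. i < \<alpha>} \<union> {i\<in>I. \<alpha> < i}"
    using assms(2) by auto (metis linorder_neqE_nat)
  moreover have "card ({i\<in>I. i < \<alpha>} \<union> {i\<in>I. \<alpha> < i}) = card {i\<in>I. i < \<alpha>} + card {i\<in>I. \<alpha> < i}"
    by (rule card_Un_disjoint) (use assms in auto)
  ultimately have "card I = card {i\<in>I. i < \<alpha>} + card {i\<in>I. \<alpha> < i}" by metis
  then show ?thesis unfolding sign_below_def sign_above_def by (simp add: power_add)
qed

lemma gsign_insert_left:
  assumes "finite I" "finite L" "\<alpha> \<notin> I" "\<alpha> \<notin> L"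
  shows "gsign (insert \<alpha> I) L = sign_below \<alpha> L * gsign I L"
proof -
  have "card {(i, j). i \<in> {\<alpha>} \<and> j \<in> L \<and> j < i} = card {j\<in>L. j < \<alpha>}"
    by (rule bij_betw_same_card[of snd]) (auto simp: bij_betw_def inj_on_def image_def)
  then have "gsign {\<alpha>} L = sign_below \<alpha> L" by (simp add: gsign_def sign_below_def)
  then show ?thesis using gsign_Un_left[of "{\<alpha>}" I L] assms by simp
qed

lemma gsign_insert_right:
  assumes "finite I" "finite L" "\<alpha> \<notin> I" "\<alpha> \<notin> L"
  shows "gsign I (insert \<alpha> L) = sign_above \<alpha> I * gsign I L"
proof -
  have "card {(i, j). i \<in> I \<and> j \<in> {\<alpha>} \<and> j < i} = card {i\<in>I. \<alpha> < i}"
    by (rule bij_betw_same_card[of fst]) (auto simp: bij_betw_def inj_on_def image_def)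
  then have "gsign I {\<alpha>} = sign_above \<alpha> I" by (simp add: gsign_def sign_above_def)
  then show ?thesis using gsign_Un_right[of I "{\<alpha>}" L] assms by simp
qed

lemma sum_Pow_insert:
  assumes "finite J" "\<alpha> \<notin> J"
  shows "(\<Sum>I\<in>Pow (insert \<alpha> J). f I) = (\<Sum>I\<in>Pow J. f I) + (\<Sum>I\<in>Pow J. f (insert \<alpha> I))"
proof -
  have "(\<Sum>I\<in>Pow (insert \<alpha> J). f I) = (\<Sum>I\<in>Pow J \<union> insert \<alpha> ` Pow J. f I)"
    by (simp add: Pow_insert)
  also have "\<dots> = (\<Sum>I\<in>Pow J. f I) + (\<Sum>I\<in>insert \<alpha> ` Pow J. f I)"
    by (rule sum.union_disjoint) (use assms in auto)
  also have "(\<Sum>I\<in>insert \<alpha> ` Pow J. f I) = (\<Sum>I\<in>Pow J. f (insert \<alpha> I))"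
    by (rule sum.reindex_cong[of "insert \<alpha>"]) (use assms in \<open>auto simp: inj_on_def\<close>)
  finally show ?thesis .
qed

lemma gmult_insert:
  assumes "finite J" "\<alpha> \<notin> J"
  shows "gmult a b (insert \<alpha> J) =
    (\<Sum>I\<in>Pow J. gsign I (insert \<alpha> (J - I)) * a I * b (insert \<alpha> (J - I))) +
    (\<Sum>I\<in>Pow J. gsign (insert \<alpha> I) (J - I) * a (insert \<alpha> I) * b (J - I))"
proof -
  have "I \<in> Pow J \<Longrightarrow> insert \<alpha> J - I = insert \<alpha> (J - I)"
    and "I \<in> Pow J \<Longrightarrow> insert \<alpha> J - insert \<alpha> I = J - I" for I
    using assms(2) by auto
  then show ?thesis
    unfolding gmult_Pow sum_Pow_insert[OF assms] by (intro arg_cong2[where f = "(+)"] sum.cong) simp_all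
qed

lemma gdiff_left_gmult_notin:
  assumes p: "gr_parity p a" and J: "finite J" "\<alpha> \<notin> J"
  shows "gdiff_left \<alpha> (gmult a b) J = gmult (gdiff_left \<alpha> a) b J + (-1) ^ p * gmult a (gdiff_left \<alpha> b) J"
proof -
  have split: "sign_below \<alpha> J = sign_below \<alpha> I * sign_below \<alpha> (J - I)"
    and fin: "finite I" "finite (J - I)" "\<alpha> \<notin> I" "\<alpha> \<notin> J - I" if "I \<in> Pow J" for I
    using that J sign_below_Un[of I "J - I" \<alpha>] by (auto simp: Un_absorb1 dest: finite_subset)
  have left: "sign_below \<alpha> J * (gsign (insert \<alpha> I) (J - I) * a (insert \<alpha> I) * b (J - I))
      = gsign I (J - I) * (sign_below \<alpha> I * a (insert \<alpha> I)) * b (J - I)" if "I \<in> Pow J" for I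
    using split[OF that] gsign_insert_left[OF fin[OF that]] sign_below_square[of \<alpha> "J - I"]
    by (simp add: algebra_simps)
  have right: "sign_below \<alpha> J * (gsign I (insert \<alpha> (J - I)) * a I * b (insert \<alpha> (J - I)))
      = (-1) ^ p * (gsign I (J - I) * a I * (sign_below \<alpha> (J - I) * b (insert \<alpha> (J - I))))"
    if "I \<in> Pow J" for I
  proof (cases "a I = 0")
    case False
    then have "sign_below \<alpha> I * sign_above \<alpha> I = (-1) ^ p"
      using sign_below_above[OF fin(1,3)[OF that]] gr_parity_sign[OF p] by simp
    then show ?thesis
      using split[OF that] gsign_insert_right[OF fin[OF that]] by (simp add: algebra_simps)
  qed simp
  have "gdiff_left \<alpha> (gmult a b) J = sign_below \<alpha> J * gmult a b (insert \<alpha> J)"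
    using J(2) by (simp add: gdiff_left_def)
  also have "\<dots> = (\<Sum>I\<in>Pow J. (-1) ^ p * (gsign I (J - I) * a I * (sign_below \<alpha> (J - I) * b (insert \<alpha> (J - I)))))
      + (\<Sum>I\<in>Pow J. gsign I (J - I) * (sign_below \<alpha> I * a (insert \<alpha> I)) * b (J - I))"
    unfolding gmult_insert[OF J] distrib_left sum_distrib_left
    by (intro arg_cong2[where f = "(+)"] sum.cong refl left right) simp_all
  also have "\<dots> = gmult (gdiff_left \<alpha> a) b J + (-1) ^ p * gmult a (gdiff_left \<alpha> b) J"
    unfolding gmult_Pow gdiff_left_def sum_distrib_left using J(2)
    by (subst add.commute) (intro arg_cong2[where f = "(+)"] sum.cong; auto)
  finally show ?thesis .
qed

lemma gdiff_left_gmult_in: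
  assumes p: "gr_parity p a" and J: "J = insert \<alpha> J'" "finite J'" "\<alpha> \<notin> J'"
  shows "gmult (gdiff_left \<alpha> a) b J + (-1) ^ p * gmult a (gdiff_left \<alpha> b) J = 0"
proof -
  have fin: "finite I" "finite (J' - I)" "\<alpha> \<notin> I" "\<alpha> \<notin> J' - I" if "I \<in> Pow J'" for I
    using that J by (auto dest: finite_subset)
  have left: "gmult (gdiff_left \<alpha> a) b J = (\<Sum>I\<in>Pow J'.
      gsign I (insert \<alpha> (J' - I)) * (sign_below \<alpha> I * a (insert \<alpha> I)) * b (insert \<alpha> (J' - I)))"
    unfolding J(1) gmult_insert[OF J(2,3)] using fin(3) J(3) by (simp add: gdiff_left_def)
  have right: "gmult a (gdiff_left \<alpha> b) J = (\<Sum>I\<in>Pow J'.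
      gsign (insert \<alpha> I) (J' - I) * a (insert \<alpha> I) * (sign_below \<alpha> (J' - I) * b (insert \<alpha> (J' - I))))"
    unfolding J(1) gmult_insert[OF J(2,3)] using fin(4) J(3) by (simp add: gdiff_left_def)
  have cancel: "gsign I (insert \<alpha> (J' - I)) * (sign_below \<alpha> I * a (insert \<alpha> I)) * b (insert \<alpha> (J' - I))
      + (-1) ^ p * (gsign (insert \<alpha> I) (J' - I) * a (insert \<alpha> I) * (sign_below \<alpha> (J' - I) * b (insert \<alpha> (J' - I)))) = 0"
    if I: "I \<in> Pow J'" for I
  proof (cases "a (insert \<alpha> I) = 0")
    case False
    have "(-1::complex) ^ p = (-1) ^ card (insert \<alpha> I)" using gr_parity_sign[OF p False] by simp
    then have "(-1::complex) ^ p = - sign_below \<alpha> I * sign_above \<alpha> I"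
      using fin[OF I] sign_below_above[of I \<alpha>] by simp
    then show ?thesis
      using gsign_insert_right[OF fin[OF I]] gsign_insert_left[OF fin[OF I]]
        sign_below_square[of \<alpha> "J' - I"] by (simp add: algebra_simps)
  qed simp
  show ?thesis
    unfolding left right sum_distrib_left sum.distrib[symmetric] using cancel by (simp add: sum.neutral)
qed

lemma gdiff_left_gmult:
  assumes p: "gr_parity p a"
  shows "gdiff_left \<alpha> (gmult a b) = gmult (gdiff_left \<alpha> a) b + gscale ((-1) ^ p) (gmult a (gdiff_left \<alpha> b))"
proof
  fix J
  show "gdiff_left \<alpha> (gmult a b) J = (gmult (gdiff_left \<alpha> a) b + gscale ((-1) ^ p) (gmult a (gdiff_left \<alpha> b))) J"
  proof (cases "finite J")
    case True
    show ?thesis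
    proof (cases "\<alpha> \<in> J")
      case False
      then show ?thesis using gdiff_left_gmult_notin[OF p True] by simp
    next
      case True
      then have "J = insert \<alpha> (J - {\<alpha>})" "finite (J - {\<alpha>})" "\<alpha> \<notin> J - {\<alpha>}"
        using \<open>finite J\<close> by auto
      then have "gmult (gdiff_left \<alpha> a) b J + (-1) ^ p * gmult a (gdiff_left \<alpha> b) J = 0"
        by (rule gdiff_left_gmult_in[OF p])
      then show ?thesis using True by (simp add: gdiff_left_def[of \<alpha> "gmult a b"])
    qed
  qed (simp add: gdiff_left_def gmult_infinite)
qed

lemma gdiff_right_eq_left:
  assumes p: "gr_parity p a" and s: "gr_supp m a"
  shows "gdiff_right \<alpha> a = gscale ((-1) ^ (p + 1)) (gdiff_left \<alpha> a)"
proof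
  fix J
  show "gdiff_right \<alpha> a J = gscale ((-1) ^ (p + 1)) (gdiff_left \<alpha> a) J"
  proof (cases "\<alpha> \<in> J \<or> a (insert \<alpha> J) = 0")
    case False
    then have nz: "a (insert \<alpha> J) \<noteq> 0" and notin: "\<alpha> \<notin> J" by auto
    have fin: "finite J" using gr_supp_finite[OF s nz] by simp
    have "(-1::complex) ^ card J = - ((-1) ^ p)"
      using gr_parity_sign[OF p nz] fin notin by (metis card_insert_disjoint minus_minus power_Suc mult_minus1)
    moreover have "sign_above \<alpha> J = sign_below \<alpha> J * (-1) ^ card J"
      using sign_below_above[OF fin notin] sign_below_square[of \<alpha> J] by (metis mult.assoc mult_1)
    ultimately show ?thesis using notin by (simp add: gdiff_right_def gdiff_left_def)
  qed (auto simp: gdiff_right_def gdiff_left_def)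
qed

lemma gdiff_left_add: "gdiff_left \<alpha> (a + b) = gdiff_left \<alpha> a + gdiff_left \<alpha> b"
  and gdiff_left_scale: "gdiff_left \<alpha> (gscale c a) = gscale c (gdiff_left \<alpha> a)"
  and gdiff_left_zero: "gdiff_left \<alpha> 0 = 0"
  and gdiff_left_gone: "gdiff_left \<alpha> gone = 0"
  and gdiff_left_gsoul: "gdiff_left \<alpha> (gsoul a) = gdiff_left \<alpha> a"
  by (rule ext; simp add: gdiff_left_def gone_def gsoul_def algebra_simps)+

section \<open>Partial derivatives and smoothness\<close>

definition axis_line :: "(real^'n::finite \<Rightarrow> complex) \<Rightarrow> real^'n \<Rightarrow> 'n \<Rightarrow> real \<Rightarrow> complex" where
  "axis_line f x a = (\<lambda>s. f (x + s *\<^sub>R axis a 1))"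

lemma pd_axis_line: "pd a f x = vector_derivative (axis_line f x a) (at 0)"
  by (simp add: pd_def axis_line_def)

lemma differentiable_axis_line:
  assumes "f differentiable (at x)"
  shows "axis_line f x a differentiable (at 0)"
proof -
  have "(\<lambda>s::real. x + s *\<^sub>R axis a 1) differentiable (at 0)"
    by (intro derivative_intros differentiable_add differentiable_const differentiable_scaleR differentiable_ident)
  moreover have "f differentiable at ((\<lambda>s::real. x + s *\<^sub>R axis a 1) 0)" using assms by simp
  ultimately have "f \<circ> (\<lambda>s::real. x + s *\<^sub>R axis a 1) differentiable (at 0)"
    by (rule differentiable_chain_at)
  then show ?thesis by (simp add: axis_line_def o_def)
qed

lemma has_vector_derivative_pd:
  assumes "f differentiable (at x)"
  shows "(axis_line f x a has_vector_derivative pd a f x) (at 0)"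
  using differentiable_axis_line[OF assms] by (simp add: pd_axis_line vector_derivative_works)

lemma pd_eqI:
  "(axis_line f x a has_vector_derivative d) (at 0) \<Longrightarrow> pd a f x = d"
  by (simp add: pd_axis_line vector_derivative_at)

lemma pd_add:
  assumes "f differentiable (at x)" "g differentiable (at x)"
  shows "pd a (\<lambda>y. f y + g y) x = pd a f x + pd a g x"
proof (rule pd_eqI)
  show "(axis_line (\<lambda>y. f y + g y) x a has_vector_derivative pd a f x + pd a g x) (at 0)"
    using has_vector_derivative_add[OF has_vector_derivative_pd[OF assms(1)] has_vector_derivative_pd[OF assms(2)]]
    by (simp add: axis_line_def)
qed

lemma pd_mult:
  assumes "f differentiable (at x)" "g differentiable (at x)"
  shows "pd a (\<lambda>y. f y * g y) x = pd a f x * g x + f x * pd a g x"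
proof (rule pd_eqI)
  have "((\<lambda>s. axis_line f x a s * axis_line g x a s) has_vector_derivative
     axis_line f x a 0 * pd a g x + pd a f x * axis_line g x a 0) (at 0)"
    using has_vector_derivative_mult[OF has_vector_derivative_pd[OF assms(1)] has_vector_derivative_pd[OF assms(2)]]
    by simp
  then show "(axis_line (\<lambda>y. f y * g y) x a has_vector_derivative pd a f x * g x + f x * pd a g x) (at 0)"
    by (simp add: axis_line_def algebra_simps)
qed

lemma pd_cmult:
  assumes "f differentiable (at x)"
  shows "pd a (\<lambda>y. c * f y) x = c * pd a f x"
proof (rule pd_eqI)
  show "(axis_line (\<lambda>y. c * f y) x a has_vector_derivative c * pd a f x) (at 0)"
  proof -
    have "(axis_line f x a has_vector_derivative pd a f x) (at 0)" by (rule has_vector_derivative_pd[OF assms])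
    from has_vector_derivative_mult_right[OF this, of c] show ?thesis by (simp add: axis_line_def)
  qed
qed

lemma pd_const: "pd a (\<lambda>y. c) x = 0"
  by (rule pd_eqI) (simp add: axis_line_def)

lemma pd_sum:
  assumes "finite A" "\<And>k. k \<in> A \<Longrightarrow> f k differentiable (at x)"
  shows "pd a (\<lambda>y. \<Sum>k\<in>A. f k y) x = (\<Sum>k\<in>A. pd a (f k) x)"
proof (rule pd_eqI)
  show "(axis_line (\<lambda>y. \<Sum>k\<in>A. f k y) x a has_vector_derivative (\<Sum>k\<in>A. pd a (f k) x)) (at 0)"
    using has_vector_derivative_sum[of A "\<lambda>k. axis_line (f k) x a" "\<lambda>k. pd a (f k) x" "at 0"]
      has_vector_derivative_pd[OF assms(2)] by (simp add: axis_line_def)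
qed

lemma pd_exp:
  assumes "f differentiable (at x)"
  shows "pd a (\<lambda>y. exp (f y)) x = exp (f x) * pd a f x"
proof (rule pd_eqI)
  have "(exp \<circ> axis_line f x a has_vector_derivative pd a f x * exp (axis_line f x a 0)) (at 0)"
    by (rule field_vector_diff_chain_at[OF has_vector_derivative_pd[OF assms]]) (rule DERIV_exp)
  then show "(axis_line (\<lambda>y. exp (f y)) x a has_vector_derivative exp (f x) * pd a f x) (at 0)"
    by (simp add: axis_line_def o_def mult.commute)
qed

lemma pd_inv:
  assumes "f differentiable (at x)" "f x \<noteq> 0"
  shows "pd a (\<lambda>y. 1 / f y) x = - pd a f x * (1 / f x) * (1 / f x)"
proof (rule pd_eqI)
  have "((\<lambda>z. 1 / z) \<circ> axis_line f x a has_vector_derivative pd a f x * (- 1 / (axis_line f x a 0)^2)) (at 0)"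
    by (rule field_vector_diff_chain_at[OF has_vector_derivative_pd[OF assms(1)]])
       (use assms(2) in \<open>auto intro!: derivative_eq_intros simp: axis_line_def power2_eq_square field_simps\<close>)
  then show "(axis_line (\<lambda>y. 1 / f y) x a has_vector_derivative - pd a f x * (1 / f x) * (1 / f x)) (at 0)"
    by (simp add: axis_line_def o_def power2_eq_square field_simps)
qed

lemma pd_local:
  assumes U: "open U" "x \<in> U" and eq: "\<And>y. y \<in> U \<Longrightarrow> f y = g y"
  shows "pd a f x = pd a g x"
proof -
  obtain r where r: "r > 0" "ball x r \<subseteq> U" using U openE by blast
  have ev: "\<forall>\<^sub>F s in nhds 0. s \<in> UNIV \<longrightarrow> axis_line f x a s = axis_line g x a s"
    unfolding eventually_nhds_metric
  proof (intro exI[of _ r] conjI allI impI r(1))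
    fix s :: real assume "dist s 0 < r"
    then have "x + s *\<^sub>R axis a 1 \<in> ball x r" by (simp add: dist_norm)
    then show "axis_line f x a s = axis_line g x a s" using r eq by (auto simp: axis_line_def)
  qed
  show ?thesis unfolding pd_axis_line by (rule vector_derivative_cong_eq[OF ev]) auto
qed

lemma differentiable_on_cong:
  assumes "open U" "f differentiable_on U" "\<And>y. y \<in> U \<Longrightarrow> f y = g y"
  shows "g differentiable_on U"
  using assms unfolding differentiable_on_eq_differentiable_at[OF assms(1)] differentiable_def
  by (meson has_derivative_transform_within_open)

lemma pds_append: "pds (as @ [a]) f = pds as (pd a f)"
  by (induction as) auto

definition diff_upto :: "(real^'n::finite) set \<Rightarrow> nat \<Rightarrow> (real^'n \<Rightarrow> complex) \<Rightarrow> bool" where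
  "diff_upto U k f \<longleftrightarrow> (\<forall>as. length as \<le> k \<longrightarrow> pds as f differentiable_on U)"

lemma diff_upto_imp_differentiable_on: "diff_upto U k f \<Longrightarrow> f differentiable_on U"
  by (auto simp: diff_upto_def dest: spec[of _ "[]"])

lemma diff_upto_0: "diff_upto U 0 f \<longleftrightarrow> f differentiable_on U"
  by (simp add: diff_upto_def)

lemma diff_upto_Suc: "diff_upto U (Suc k) f \<longleftrightarrow> f differentiable_on U \<and> (\<forall>a. diff_upto U k (pd a f))"
proof
  assume h: "diff_upto U (Suc k) f"
  show "f differentiable_on U \<and> (\<forall>a. diff_upto U k (pd a f))"
  proof
    show "f differentiable_on U" using h[unfolded diff_upto_def, rule_format, of "[]"] by simp
    show "\<forall>a. diff_upto U k (pd a f)" unfolding diff_upto_def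
      using h[unfolded diff_upto_def] by (metis pds_append length_append_singleton not_less_eq_eq)
  qed
next
  assume h: "f differentiable_on U \<and> (\<forall>a. diff_upto U k (pd a f))"
  show "diff_upto U (Suc k) f" unfolding diff_upto_def
  proof (intro allI impI)
    fix as :: "'a list" assume l: "length as \<le> Suc k"
    show "pds as f differentiable_on U"
    proof (cases as rule: rev_exhaust)
      case Nil then show ?thesis using h by simp
    next
      case (snoc bs a)
      then show ?thesis using h l unfolding diff_upto_def by (auto simp: pds_append)
    qed
  qed
qed

lemma smooth_on_iff_diff_upto: "smooth_on U f \<longleftrightarrow> (\<forall>k. diff_upto U k f)"
  by (auto simp: smooth_on_def diff_upto_def)

lemma diff_upto_Suc_mono: "diff_upto U (Suc k) f \<Longrightarrow> diff_upto U k f"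
  by (auto simp: diff_upto_def)

lemma diff_upto_imp_differentiable: "open U \<Longrightarrow> diff_upto U k f \<Longrightarrow> x \<in> U \<Longrightarrow> f differentiable (at x)"
  by (auto simp: diff_upto_def differentiable_on_eq_differentiable_at dest: spec[of _ "[]"])

lemma diff_upto_cong:
  assumes "open U" shows "diff_upto U k f \<Longrightarrow> (\<And>y. y \<in> U \<Longrightarrow> f y = g y) \<Longrightarrow> diff_upto U k g"
proof (induction k arbitrary: f g)
  case 0 then show ?case unfolding diff_upto_0 using differentiable_on_cong[OF assms] by blast
next
  case (Suc k)
  show ?case unfolding diff_upto_Suc
  proof
    show "g differentiable_on U" using Suc.prems differentiable_on_cong[OF assms] unfolding diff_upto_Suc by blast
    show "\<forall>a. diff_upto U k (pd a g)"
    proof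
      fix a
      show "diff_upto U k (pd a g)"
        by (rule Suc.IH[of "pd a f"]) (use Suc.prems in \<open>auto simp: diff_upto_Suc intro: pd_local[OF assms]\<close>)
    qed
  qed
qed

lemma diff_upto_const: "diff_upto U k (\<lambda>y. c)"
proof (induction k arbitrary: c)
  case 0 then show ?case by (simp add: diff_upto_0)
next
  case (Suc k)
  have e: "pd a (\<lambda>y. c) = (\<lambda>y. 0)" for a by (rule ext) (rule pd_const)
  show ?case unfolding diff_upto_Suc e using Suc.IH[of 0] by simp
qed

lemma diff_upto_add:
  assumes U: "open U"
  shows "diff_upto U k f \<Longrightarrow> diff_upto U k g \<Longrightarrow> diff_upto U k (\<lambda>y. f y + g y)"
proof (induction k arbitrary: f g)
  case 0 then show ?case by (simp add: diff_upto_0 differentiable_on_add)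
next
  case (Suc k)
  show ?case unfolding diff_upto_Suc
  proof (intro conjI allI)
    show "(\<lambda>y. f y + g y) differentiable_on U" using Suc.prems by (simp add: diff_upto_Suc differentiable_on_add)
    fix a
    have "diff_upto U k (\<lambda>y. pd a f y + pd a g y)" using Suc by (simp add: diff_upto_Suc)
    then show "diff_upto U k (pd a (\<lambda>y. f y + g y))"
      by (rule diff_upto_cong[OF U])
         (rule pd_add[symmetric]; rule diff_upto_imp_differentiable[OF U]; use Suc.prems in auto)
  qed
qed

lemma diff_upto_mult:
  assumes U: "open U"
  shows "diff_upto U k f \<Longrightarrow> diff_upto U k g \<Longrightarrow> diff_upto U k (\<lambda>y. f y * g y)"
proof (induction k arbitrary: f g)
  case 0 then show ?case by (simp add: diff_upto_0 differentiable_on_mult)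
next
  case (Suc k)
  show ?case unfolding diff_upto_Suc
  proof (intro conjI allI)
    show "(\<lambda>y. f y * g y) differentiable_on U" using Suc.prems by (simp add: diff_upto_Suc differentiable_on_mult)
    fix a
    have "diff_upto U k (\<lambda>y. pd a f y * g y)" "diff_upto U k (\<lambda>y. f y * pd a g y)"
      using Suc.IH Suc.prems by (simp_all add: diff_upto_Suc diff_upto_Suc_mono)
    then have "diff_upto U k (\<lambda>y. pd a f y * g y + f y * pd a g y)" by (rule diff_upto_add[OF U])
    then show "diff_upto U k (pd a (\<lambda>y. f y * g y))"
      by (rule diff_upto_cong[OF U])
         (rule pd_mult[symmetric]; rule diff_upto_imp_differentiable[OF U]; use Suc.prems in auto)
  qed
qed

lemma diff_upto_exp:
  assumes U: "open U"
  shows "diff_upto U k f \<Longrightarrow> diff_upto U k (\<lambda>y. exp (f y))"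
proof (induction k arbitrary: f)
  case 0
  have "(\<lambda>y. exp (f y)) differentiable at x" if "x \<in> U" for x
  proof -
    have "f differentiable at x" using 0 that diff_upto_imp_differentiable[OF U] by blast
    moreover have "exp differentiable at (f x)"
      using DERIV_exp field_differentiable_def field_differentiable_imp_differentiable by blast
    ultimately show ?thesis using differentiable_chain_at[of f x exp] by (simp add: o_def)
  qed
  then show ?case by (simp add: diff_upto_0 differentiable_on_eq_differentiable_at[OF U])
next
  case (Suc k)
  have "diff_upto U k (pd a (\<lambda>y. exp (f y)))" for a
  proof -
    have "diff_upto U k (\<lambda>y. exp (f y) * pd a f y)"
      using Suc.IH[of f] Suc.prems by (intro diff_upto_mult[OF U]) (auto simp: diff_upto_Suc diff_upto_Suc_mono)
    then show ?thesis
      by (rule diff_upto_cong[OF U])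
         (rule pd_exp[symmetric]; rule diff_upto_imp_differentiable[OF U]; use Suc.prems in auto)
  qed
  moreover have "(\<lambda>y. exp (f y)) differentiable_on U"
    using Suc.IH[OF diff_upto_Suc_mono[OF Suc.prems]] by (rule diff_upto_imp_differentiable_on)
  ultimately show ?case by (simp add: diff_upto_Suc)
qed

lemma diff_upto_inv:
  assumes U: "open U" and nz: "\<And>y. y \<in> U \<Longrightarrow> f y \<noteq> 0"
  shows "diff_upto U k f \<Longrightarrow> diff_upto U k (\<lambda>y. 1 / f y)"
proof (induction k)
  case 0
  have "(\<lambda>y. 1 / f y) differentiable at x" if "x \<in> U" for x
    using diff_upto_imp_differentiable[OF U 0 that] nz[OF that] by (intro differentiable_divide) auto
  then show ?case by (simp add: diff_upto_0 differentiable_on_eq_differentiable_at[OF U])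
next
  case (Suc k)
  have inv: "diff_upto U k (\<lambda>y. 1 / f y)" using Suc.IH Suc.prems diff_upto_Suc_mono by blast
  have "diff_upto U k (pd a (\<lambda>y. 1 / f y))" for a
  proof -
    have "diff_upto U k (\<lambda>y. (- 1) * pd a f y)"
      using Suc.prems by (intro diff_upto_mult[OF U] diff_upto_const) (auto simp: diff_upto_Suc)
    then have "diff_upto U k (\<lambda>y. (- pd a f y * (1 / f y)) * (1 / f y))"
      by (intro diff_upto_mult[OF U] inv) simp
    then show ?thesis
      by (rule diff_upto_cong[OF U])
         (rule pd_inv[symmetric]; use diff_upto_imp_differentiable[OF U] Suc.prems nz in auto)
  qed
  then show ?case using inv by (simp add: diff_upto_Suc diff_upto_imp_differentiable_on)
qed

lemma diff_upto_sum:
  assumes U: "open U"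
  shows "(\<And>i. i \<in> A \<Longrightarrow> diff_upto U k (f i)) \<Longrightarrow> diff_upto U k (\<lambda>y. \<Sum>i\<in>A. f i y)"
proof (induction A rule: infinite_finite_induct)
  case (infinite A) then show ?case by (simp add: diff_upto_const)
next
  case empty then show ?case by (simp add: diff_upto_const)
next
  case (insert i A) then show ?case by (simp add: diff_upto_add[OF U])
qed

lemma smooth_const: "smooth_on U (\<lambda>y. c)" by (simp add: smooth_on_iff_diff_upto diff_upto_const)
lemma smooth_add: "open U \<Longrightarrow> smooth_on U f \<Longrightarrow> smooth_on U g \<Longrightarrow> smooth_on U (\<lambda>y. f y + g y)"
  by (simp add: smooth_on_iff_diff_upto diff_upto_add)
lemma smooth_mult: "open U \<Longrightarrow> smooth_on U f \<Longrightarrow> smooth_on U g \<Longrightarrow> smooth_on U (\<lambda>y. f y * g y)"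
  by (simp add: smooth_on_iff_diff_upto diff_upto_mult)
lemma smooth_exp: "open U \<Longrightarrow> smooth_on U f \<Longrightarrow> smooth_on U (\<lambda>y. exp (f y))"
  by (simp add: smooth_on_iff_diff_upto diff_upto_exp)
lemma smooth_inv: "open U \<Longrightarrow> (\<And>y. y \<in> U \<Longrightarrow> f y \<noteq> 0) \<Longrightarrow> smooth_on U f \<Longrightarrow> smooth_on U (\<lambda>y. 1 / f y)"
  by (simp add: smooth_on_iff_diff_upto diff_upto_inv)
lemma smooth_sum: "open U \<Longrightarrow> (\<And>i. i \<in> A \<Longrightarrow> smooth_on U (f i)) \<Longrightarrow> smooth_on U (\<lambda>y. \<Sum>i\<in>A. f i y)"
  by (simp add: smooth_on_iff_diff_upto diff_upto_sum)
lemma smooth_pd: "smooth_on U f \<Longrightarrow> smooth_on U (pd a f)"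
  by (meson smooth_on_iff_diff_upto diff_upto_Suc)
lemma smooth_on_imp_differentiable: "open U \<Longrightarrow> smooth_on U f \<Longrightarrow> x \<in> U \<Longrightarrow> f differentiable (at x)"
  by (meson smooth_on_iff_diff_upto diff_upto_imp_differentiable)
lemma smooth_cmult: "open U \<Longrightarrow> smooth_on U f \<Longrightarrow> smooth_on U (\<lambda>y. c * f y)"
  by (simp add: smooth_mult smooth_const)

section \<open>Superfunctions\<close>

definition gsmooth :: "(real^'n::finite) set \<Rightarrow> 'n sfun \<Rightarrow> bool" where
  "gsmooth U F \<longleftrightarrow> (\<forall>I. smooth_on U (\<lambda>y. F y I))"

lemma sfun_gsmooth: "sfun m U F \<Longrightarrow> gsmooth U F"
  by (simp add: sfun_def gsmooth_def)

lemma sfun_gr_supp: "sfun m U F \<Longrightarrow> x \<in> U \<Longrightarrow> gr_supp m (F x)"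
  by (simp add: sfun_def gr_supp_def)

lemma homog_iff_gr_parity: "homog p U F \<longleftrightarrow> (\<forall>x\<in>U. gr_parity p (F x))"
  by (simp add: homog_def gr_parity_def)

lemma gsmooth_coeff: "gsmooth U F \<Longrightarrow> smooth_on U (\<lambda>y. F y I)"
  by (simp add: gsmooth_def)

lemma gsmooth_const: "gsmooth U (\<lambda>y. a)"
  by (simp add: gsmooth_def smooth_const)

lemma dleft_Inr: "dleft (Inr \<alpha>) F x = gdiff_left \<alpha> (F x)"
  by (rule ext) (simp add: dleft_def gdiff_left_def sign_below_def)

lemma dright_Inr: "dright (Inr \<alpha>) F x = gdiff_right \<alpha> (F x)"
  by (rule ext) (simp add: dright_def gdiff_right_def sign_above_def)

lemma dleft_Inl: "dleft (Inl a) F x J = pd a (\<lambda>y. F y J) x"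
  and dright_Inl: "dright (Inl a) F x J = pd a (\<lambda>y. F y J) x"
  by (simp_all add: dleft_def dright_def)

context
  fixes U :: "(real^'n::finite) set"
  assumes U: "open U"
begin

lemma gsmooth_differentiable: "gsmooth U F \<Longrightarrow> x \<in> U \<Longrightarrow> (\<lambda>y. F y J) differentiable (at x)"
  using smooth_on_imp_differentiable[OF U] by (simp add: gsmooth_def)

lemma gsmooth_gmult: "gsmooth U F \<Longrightarrow> gsmooth U G \<Longrightarrow> gsmooth U (\<lambda>y. gmult (F y) (G y))"
  unfolding gsmooth_def
proof (intro allI)
  fix K assume F: "\<forall>I. smooth_on U (\<lambda>y. F y I)" and G: "\<forall>I. smooth_on U (\<lambda>y. G y I)"
  show "smooth_on U (\<lambda>y. gmult (F y) (G y) K)"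
  proof (cases "finite K")
    case True
    then show ?thesis unfolding gmult_Pow
      by (intro smooth_sum[OF U] smooth_mult[OF U] smooth_const F[rule_format] G[rule_format])
  qed (simp add: gmult_infinite smooth_const)
qed

lemma gsmooth_add: "gsmooth U F \<Longrightarrow> gsmooth U G \<Longrightarrow> gsmooth U (\<lambda>y. F y + G y)"
  by (simp add: gsmooth_def smooth_add[OF U])

lemma gsmooth_scale: "gsmooth U F \<Longrightarrow> gsmooth U (\<lambda>y. gscale c (F y))"
  by (simp add: gsmooth_def smooth_cmult[OF U])

lemma gsmooth_scale_fun: "smooth_on U c \<Longrightarrow> gsmooth U F \<Longrightarrow> gsmooth U (\<lambda>y. gscale (c y) (F y))"
  by (simp add: gsmooth_def smooth_mult[OF U])

lemma gsmooth_sum: "(\<And>i. i \<in> A \<Longrightarrow> gsmooth U (F i)) \<Longrightarrow> gsmooth U (\<lambda>y. \<Sum>i\<in>A. F i y)"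
  by (simp add: gsmooth_def sum_apply smooth_sum[OF U])

lemma gsmooth_gpow: "gsmooth U F \<Longrightarrow> gsmooth U (\<lambda>y. gpow (F y) k)"
  by (induction k) (simp_all add: gsmooth_gmult gsmooth_const)

lemma gsmooth_gsoul: "gsmooth U F \<Longrightarrow> gsmooth U (\<lambda>y. gsoul (F y))"
  unfolding gsmooth_def gsoul_def
proof
  fix I assume "\<forall>I. smooth_on U (\<lambda>y. F y I)"
  then show "smooth_on U (\<lambda>y. if I = {} then 0 else F y I)"
    by (cases "I = {}") (auto simp: smooth_const)
qed

lemma gsmooth_gexp: "gsmooth U F \<Longrightarrow> gsmooth U (\<lambda>y. gexp m (F y))"
  unfolding gexp_def
  by (intro gsmooth_scale_fun smooth_exp[OF U] gsmooth_coeff gsmooth_sum gsmooth_scale gsmooth_gpow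
      gsmooth_gsoul)

lemma gsmooth_ginv:
  assumes F: "gsmooth U F" and nz: "\<And>y. y \<in> U \<Longrightarrow> F y {} \<noteq> 0"
  shows "gsmooth U (\<lambda>y. ginv m (F y))"
proof -
  have inv: "smooth_on U (\<lambda>y. 1 / F y {})" by (rule smooth_inv[OF U nz gsmooth_coeff[OF F]])
  then have "smooth_on U (\<lambda>y. - 1 / F y {})"
    using smooth_cmult[OF U inv, of "- 1"] by simp
  then show ?thesis
    unfolding ginv_def by (intro gsmooth_scale_fun gsmooth_sum gsmooth_gpow inv gsmooth_gsoul F)
qed

lemma gsmooth_dleft:
  assumes F: "gsmooth U F"
  shows "gsmooth U (dleft A F)"
proof (cases A)
  case (Inl a)
  then show ?thesis using F unfolding gsmooth_def by (auto simp: dleft_Inl intro: smooth_pd)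
next
  case (Inr \<alpha>)
  have "smooth_on U (\<lambda>y. dleft (Inr \<alpha>) F y I)" for I
    by (cases "\<alpha> \<in> I") (simp_all add: dleft_def smooth_const smooth_cmult[OF U] gsmooth_coeff[OF F])
  then show ?thesis unfolding Inr gsmooth_def by blast
qed

lemma gsmooth_dright:
  assumes F: "gsmooth U F"
  shows "gsmooth U (dright A F)"
proof (cases A)
  case (Inl a)
  then show ?thesis using F unfolding gsmooth_def by (auto simp: dright_Inl intro: smooth_pd)
next
  case (Inr \<alpha>)
  have "smooth_on U (\<lambda>y. dright (Inr \<alpha>) F y I)" for I
    by (cases "\<alpha> \<in> I") (simp_all add: dright_def smooth_const smooth_cmult[OF U] gsmooth_coeff[OF F])
  then show ?thesis unfolding Inr gsmooth_def by blast
qed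

lemma dleft_local:
  assumes x: "x \<in> U" and eq: "\<And>y. y \<in> U \<Longrightarrow> F y = G y"
  shows "dleft A F x = dleft A G x"
proof (cases A)
  case (Inl a)
  show ?thesis unfolding Inl by (rule ext) (simp only: dleft_Inl, rule pd_local[OF U x], simp add: eq)
qed (simp add: dleft_Inr eq[OF x])

lemma abr_local:
  assumes x: "x \<in> U" and eq: "\<And>y. y \<in> U \<Longrightarrow> G y = G' y"
  shows "abr m E F G x = abr m E F G' x"
  unfolding abr_def using dleft_local[OF x eq] by simp

lemma Lap_local:
  assumes x: "x \<in> U" and eq: "\<And>y. y \<in> U \<Longrightarrow> F y = G y"
  shows "Lap m \<rho> E F x = Lap m \<rho> E G x"
proof -
  have "dleft A (\<lambda>y. gmult (\<rho> y) (gmult (E A B y) (dleft B F y))) x =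
        dleft A (\<lambda>y. gmult (\<rho> y) (gmult (E A B y) (dleft B G y))) x" for A B
    by (rule dleft_local[OF x]) (simp add: dleft_local[OF _ eq])
  then show ?thesis unfolding Lap_def by simp
qed

lemma commLap_local:
  assumes x: "x \<in> U" and eq: "\<And>y. y \<in> U \<Longrightarrow> F y = G y"
  shows "commLap m \<rho> E \<Psi> F x = commLap m \<rho> E \<Psi> G x"
proof -
  have "Lap m \<rho> E (smul \<Psi> F) x = Lap m \<rho> E (smul \<Psi> G) x"
    by (rule Lap_local[OF x]) (simp add: smul_def eq)
  moreover have "Lap m \<rho> E F x = Lap m \<rho> E G x" by (rule Lap_local[OF x eq])
  ultimately show ?thesis unfolding commLap_def smul_def by (simp add: eq[OF x])
qed

lemma dleft_add:
  assumes "gsmooth U F" "gsmooth U G" "x \<in> U"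
  shows "dleft A (\<lambda>y. F y + G y) x = dleft A F x + dleft A G x"
proof (cases A)
  case (Inl a)
  show ?thesis unfolding Inl
    by (rule ext) (simp add: dleft_Inl pd_add gsmooth_differentiable assms)
qed (simp add: dleft_Inr gdiff_left_add)

lemma dleft_scale:
  assumes "gsmooth U F" "x \<in> U"
  shows "dleft A (\<lambda>y. gscale c (F y)) x = gscale c (dleft A F x)"
proof (cases A)
  case (Inl a)
  show ?thesis unfolding Inl
    by (rule ext) (simp add: dleft_Inl pd_cmult gsmooth_differentiable assms)
qed (simp add: dleft_Inr gdiff_left_scale)

lemma dleft_zero: "dleft A (\<lambda>y. 0) x = 0"
  and dleft_gone: "dleft A (\<lambda>y. gone) x = 0"
  by (cases A; rule ext; simp add: dleft_Inl pd_const dleft_Inr gdiff_left_zero gdiff_left_gone)+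

lemma dleft_sum:
  assumes "finite S" "\<And>i. i \<in> S \<Longrightarrow> gsmooth U (F i)" "x \<in> U"
  shows "dleft A (\<lambda>y. \<Sum>i\<in>S. F i y) x = (\<Sum>i\<in>S. dleft A (F i) x)"
  using assms(1,2)
proof (induction S rule: finite_induct)
  case empty
  show ?case using dleft_zero[of A x] by (simp add: zero_fun_def)
next
  case (insert j S)
  have "dleft A (\<lambda>y. \<Sum>i\<in>insert j S. F i y) x = dleft A (\<lambda>y. F j y + (\<Sum>i\<in>S. F i y)) x"
    using insert by simp
  also have "\<dots> = dleft A (F j) x + dleft A (\<lambda>y. \<Sum>i\<in>S. F i y) x"
    by (rule dleft_add) (use insert assms(3) in \<open>auto intro: gsmooth_sum\<close>)
  finally show ?case using insert.IH insert.prems by (simp only: sum.insert[OF insert(1,2)]) simp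
qed

lemma dleft_gmult:
  assumes F: "gsmooth U F" and G: "gsmooth U G" and x: "x \<in> U" and p: "gr_parity p (F x)"
  shows "dleft A (\<lambda>y. gmult (F y) (G y)) x =
     gmult (dleft A F x) (G x) + gscale ((-1) ^ (eps A * p)) (gmult (F x) (dleft A G x))"
proof (cases A)
  case (Inl a)
  show ?thesis unfolding Inl
  proof (rule ext)
    fix K
    show "dleft (Inl a) (\<lambda>y. gmult (F y) (G y)) x K =
      (gmult (dleft (Inl a) F x) (G x) + gscale ((-1) ^ (eps (Inl a) * p)) (gmult (F x) (dleft (Inl a) G x))) K"
    proof (cases "finite K")
      case True
      have "dleft (Inl a) (\<lambda>y. gmult (F y) (G y)) x K =
        pd a (\<lambda>y. \<Sum>I\<in>Pow K. gsign I (K - I) * (F y I * G y (K - I))) x"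
        by (simp add: dleft_Inl gmult_Pow mult.assoc)
      also have "\<dots> = (\<Sum>I\<in>Pow K. gsign I (K - I) *
          (pd a (\<lambda>y. F y I) x * G x (K - I) + F x I * pd a (\<lambda>y. G y (K - I)) x))"
        using True
        by (simp add: pd_sum pd_cmult pd_mult gsmooth_differentiable[OF F x]
            gsmooth_differentiable[OF G x] differentiable_mult differentiable_const)
      also have "\<dots> = (gmult (dleft (Inl a) F x) (G x) +
          gscale ((-1) ^ (eps (Inl a) * p)) (gmult (F x) (dleft (Inl a) G x))) K"
        by (simp add: gmult_Pow dleft_Inl algebra_simps sum.distrib)
      finally show ?thesis .
    qed (simp add: dleft_Inl gmult_infinite pd_const)
  qed
qed (simp add: dleft_Inr gdiff_left_gmult[OF p])

lemma gr_parity_dleft: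
  assumes h: "homog p U F" and s: "gr_supp m (F x)" and x: "x \<in> U"
  shows "gr_parity (p + eps A) (dleft A F x)"
proof (cases A)
  case (Inl a)
  show ?thesis unfolding Inl gr_parity_def
  proof (intro allI impI)
    fix J assume nz: "dleft (Inl a) F x J \<noteq> 0"
    show "card J mod 2 = (p + eps (Inl a)) mod 2"
    proof (rule ccontr)
      assume "card J mod 2 \<noteq> (p + eps (Inl a)) mod 2"
      then have "\<And>y. y \<in> U \<Longrightarrow> F y J = 0" using h by (auto simp: homog_def)
      then have "pd a (\<lambda>y. F y J) x = pd a (\<lambda>y. 0) x" by (intro pd_local[OF U x]) auto
      then show False using nz by (simp add: dleft_Inl pd_const)
    qed
  qed
next
  case (Inr \<alpha>)
  show ?thesis unfolding Inr gr_parity_def dleft_Inr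
  proof (intro allI impI)
    fix J assume nz: "gdiff_left \<alpha> (F x) J \<noteq> 0"
    then have notin: "\<alpha> \<notin> J" and nz': "F x (insert \<alpha> J) \<noteq> 0"
      by (auto simp: gdiff_left_def split: if_splits)
    have "finite J" using gr_supp_finite[OF s nz'] by simp
    moreover have "card (insert \<alpha> J) mod 2 = p mod 2" using h x nz' by (auto simp: homog_def)
    ultimately show "card J mod 2 = (p + eps (Inr \<alpha>)) mod 2" using notin by simp presburger
  qed
qed

lemma gr_supp_dleft:
  assumes s: "\<And>y. y \<in> U \<Longrightarrow> gr_supp m (F y)" and x: "x \<in> U"
  shows "gr_supp m (dleft A F x)"
proof (cases A)
  case (Inl a)
  show ?thesis unfolding Inl gr_supp_def
  proof (intro allI impI)
    fix J assume nz: "dleft (Inl a) F x J \<noteq> 0"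
    show "J \<subseteq> {..<m}"
    proof (rule ccontr)
      assume "\<not> J \<subseteq> {..<m}"
      then have "\<And>y. y \<in> U \<Longrightarrow> F y J = 0" using s by (auto simp: gr_supp_def)
      then have "pd a (\<lambda>y. F y J) x = pd a (\<lambda>y. 0) x" by (intro pd_local[OF U x]) auto
      then show False using nz by (simp add: dleft_Inl pd_const)
    qed
  qed
qed (use s[OF x] in \<open>auto simp: dleft_Inr gdiff_left_def gr_supp_def split: if_splits\<close>)

end

section \<open>The antibracket as a derivation\<close>

context
  fixes U :: "(real^'n::finite) set"
  assumes U: "open U"
begin

lemma gsmooth_abr:
  assumes "\<And>A B. A \<in> idx m \<Longrightarrow> B \<in> idx m \<Longrightarrow> gsmooth U (E A B)" "gsmooth U F" "gsmooth U G"
  shows "gsmooth U (abr m E F G)"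
  unfolding abr_def using assms
  by (intro gsmooth_sum[OF U] gsmooth_gmult[OF U] gsmooth_dright[OF U] gsmooth_dleft[OF U]) auto

lemma gsmooth_Lap:
  assumes "\<And>A B. A \<in> idx m \<Longrightarrow> B \<in> idx m \<Longrightarrow> gsmooth U (E A B)"
    and "gsmooth U \<rho>" "\<And>y. y \<in> U \<Longrightarrow> \<rho> y {} \<noteq> 0" and "gsmooth U F"
  shows "gsmooth U (Lap m \<rho> E F)"
  unfolding Lap_def using assms
  by (intro gsmooth_gmult[OF U] gsmooth_ginv[OF U] gsmooth_sum[OF U] gsmooth_scale[OF U]
      gsmooth_dleft[OF U]) auto

lemma abr_add:
  assumes "gsmooth U F" "gsmooth U G" "x \<in> U"
  shows "abr m E H (\<lambda>y. F y + G y) x = abr m E H F x + abr m E H G x"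
  unfolding abr_def by (simp add: dleft_add[OF U assms] gmult_add_right sum.distrib)

lemma abr_scale:
  assumes "gsmooth U F" "x \<in> U"
  shows "abr m E H (\<lambda>y. gscale c (F y)) x = gscale c (abr m E H F x)"
  unfolding abr_def by (simp add: dleft_scale[OF U assms] gmult_scale_right gscale_sum)

lemma abr_zero: "abr m E H (\<lambda>y. 0) x = 0"
  and abr_gone: "abr m E H (\<lambda>y. gone) x = 0"
  unfolding abr_def dleft_zero[OF U] dleft_gone[OF U] by simp_all

lemma abr_sum:
  assumes "finite S" "\<And>i. i \<in> S \<Longrightarrow> gsmooth U (F i)" "x \<in> U"
  shows "abr m E H (\<lambda>y. \<Sum>i\<in>S. F i y) x = (\<Sum>i\<in>S. abr m E H (F i) x)"
  unfolding abr_def by (simp add: dleft_sum[OF U assms] gmult_sum_right sum.swap[of _ S])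

lemma abr_gmult:
  assumes F: "gsmooth U F" and G: "gsmooth U G" and x: "x \<in> U" and p: "gr_parity 0 (F x)"
  shows "abr m E H (\<lambda>y. gmult (F y) (G y)) x = gmult (abr m E H F x) (G x) + gmult (F x) (abr m E H G x)"
proof -
  have "gmult c (dleft B (\<lambda>y. gmult (F y) (G y)) x)
     = gmult (gmult c (dleft B F x)) (G x) + gmult (F x) (gmult c (dleft B G x))" for B c
  proof -
    have "gmult c (gmult (F x) z) = gmult (F x) (gmult c z)" for z
      by (simp only: gmult_assoc[symmetric] gmult_commute_even(2)[OF p])
    then show ?thesis by (simp add: dleft_gmult[OF U F G x p] gmult_add_right gmult_assoc)
  qed
  then show ?thesis unfolding abr_def by (simp add: sum.distrib gmult_sum_left gmult_sum_right)
qed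

lemma dleft_gpow:
  assumes s: "gsmooth U s" and x: "x \<in> U" and p: "gr_parity 0 (s x)"
  shows "dleft B (\<lambda>y. gpow (s y) k) x = gscale (of_nat k) (gmult (dleft B s x) (gpow (s x) (k - 1)))"
proof (induction k)
  case 0
  show ?case by (simp add: dleft_gone[OF U])
next
  case (Suc k)
  have "dleft B (\<lambda>y. gpow (s y) (Suc k)) x = gmult (dleft B s x) (gpow (s x) k)
      + gscale ((-1) ^ (eps B * 0)) (gmult (s x) (dleft B (\<lambda>y. gpow (s y) k) x))"
    by (simp only: gpow.simps) (rule dleft_gmult[OF U s gsmooth_gpow[OF U s] x p])
  also have "gmult (s x) (dleft B (\<lambda>y. gpow (s y) k) x) = gscale (of_nat k) (gmult (dleft B s x) (gpow (s x) k))"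
  proof (cases k)
    case (Suc j)
    have "gmult (s x) (gmult (dleft B s x) (gpow (s x) j)) = gmult (dleft B s x) (gpow (s x) (Suc j))"
      by (simp only: gpow.simps gmult_assoc[symmetric] gmult_commute_even(1)[OF p, of "dleft B s x"])
    then show ?thesis unfolding Suc.IH using Suc by (simp add: gmult_scale_right)
  qed (simp add: dleft_gone[OF U])
  finally show ?case by (rule trans) (rule ext, simp add: algebra_simps)
qed

text \<open>The truncation of the exponential series costs nothing: differentiating the identity
  \<open>s\<^sup>m\<^sup>+\<^sup>1 = 0\<close> gives \<open>(D s) s\<^sup>m = 0\<close>.\<close>

lemma dleft_exp_series:
  assumes s: "gsmooth U s" and x: "x \<in> U" and p: "gr_parity 0 (s x)"
    and nil: "\<And>y. y \<in> U \<Longrightarrow> gpow (s y) (Suc m) = 0"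
  shows "dleft B (\<lambda>y. \<Sum>k\<le>m. gscale (1 / fact k) (gpow (s y) k)) x
     = gmult (dleft B s x) (\<Sum>k\<le>m. gscale (1 / fact k) (gpow (s x) k))"
proof -
  define ds where "ds = dleft B s x"
  have top: "gmult ds (gpow (s x) m) = 0"
  proof -
    have "dleft B (\<lambda>y. gpow (s y) (Suc m)) x = dleft B (\<lambda>y. 0) x"
      by (rule dleft_local[OF U x]) (rule nil)
    then have "gscale (of_nat (Suc m)) (gmult ds (gpow (s x) m)) = gscale (of_nat (Suc m)) 0"
      unfolding dleft_gpow[OF s x p] dleft_zero[OF U] ds_def by simp
    then show ?thesis by (rule gscale_cancel[rotated]) (rule of_nat_neq_0)
  qed
  have "dleft B (\<lambda>y. \<Sum>k\<le>m. gscale (1 / fact k) (gpow (s y) k)) x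
      = (\<Sum>k\<le>m. gscale (1 / fact k) (gscale (of_nat k) (gmult ds (gpow (s x) (k - 1)))))"
    by (simp add: dleft_sum[OF U] dleft_scale[OF U] gsmooth_scale[OF U] gsmooth_gpow[OF U s] x
        dleft_gpow[OF s x p] ds_def)
  also have "\<dots> = (\<Sum>k\<le>m. gscale (1 / fact k) (gmult ds (gpow (s x) k)))"
  proof (cases m)
    case (Suc n)
    have "(\<Sum>k\<le>m. gscale (1 / fact k) (gscale (of_nat k) (gmult ds (gpow (s x) (k - 1)))))
        = (\<Sum>k\<le>n. gscale (1 / fact k) (gmult ds (gpow (s x) k)))"
      using gscale_fact_Suc unfolding Suc sum.atMost_Suc_shift by simp
    also have "\<dots> = (\<Sum>k\<le>m. gscale (1 / fact k) (gmult ds (gpow (s x) k)))"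
      unfolding Suc sum.atMost_Suc top[unfolded Suc] by simp
    finally show ?thesis .
  qed (use top in simp)
  finally show ?thesis unfolding ds_def by (simp add: gmult_sum_right gmult_scale_right)
qed

lemma dleft_gexp:
  assumes X: "gsmooth U X" and Xs: "\<And>y. y \<in> U \<Longrightarrow> gr_supp m (X y)"
    and Xp: "\<And>y. y \<in> U \<Longrightarrow> gr_parity 0 (X y)" and x: "x \<in> U"
  shows "dleft B (\<lambda>y. gexp m (X y)) x = gmult (dleft B X x) (gexp m (X x))"
proof -
  define S where "S = (\<lambda>y. \<Sum>k\<le>m. gscale (1 / fact k) (gpow (gsoul (X y)) k))"
  define e where "e = (\<lambda>y. exp (X y {}))"
  have gexp: "gexp m (X y) = gscale (e y) (S y)" for y by (simp add: gexp_def S_def e_def)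
  have "gpow (gsoul (X y)) (Suc m) = 0" if "y \<in> U" for y
    using gpow_eq_0 gr_supp_gsoul gr_order_gsoul Xs[OF that] by blast
  then have dS: "dleft B S x = gmult (dleft B (\<lambda>y. gsoul (X y)) x) (S x)"
    unfolding S_def by (intro dleft_exp_series[OF gsmooth_gsoul[OF U X] x gr_parity_gsoul[OF Xp[OF x]]])
  show ?thesis
  proof (cases B)
    case (Inl a)
    have Ssm: "gsmooth U S" unfolding S_def
      by (intro gsmooth_sum[OF U] gsmooth_scale[OF U] gsmooth_gpow[OF U] gsmooth_gsoul[OF U X])
    have Sfin: "gr_finite (S x)" unfolding S_def
      by (intro gr_supp_imp_finite[of m] gr_supp_sum gr_supp_scale gr_supp_gpow gr_supp_gsoul Xs x)
    have "dleft (Inl a) X x = gscale (pd a (\<lambda>y. X y {}) x) gone + dleft (Inl a) (\<lambda>y. gsoul (X y)) x"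
      by (rule ext) (simp add: dleft_Inl gone_def gsoul_def pd_const)
    moreover have "pd a e x = e x * pd a (\<lambda>y. X y {}) x"
      unfolding e_def by (rule pd_exp[OF gsmooth_differentiable[OF U X x]])
    moreover have "dleft (Inl a) (\<lambda>y. gscale (e y) (S y)) x =
        gscale (pd a e x) (S x) + gscale (e x) (dleft (Inl a) S x)"
      using smooth_exp[OF U gsmooth_coeff[OF X]] Ssm x unfolding e_def
      by (intro ext) (simp add: dleft_Inl pd_mult smooth_on_imp_differentiable[OF U] gsmooth_differentiable[OF U])
    ultimately show ?thesis
      unfolding gexp Inl dS[unfolded Inl]
      by (simp add: gmult_add_left gmult_scale_left gmult_scale_right gmult_gone_left[OF Sfin]
          gscale_add mult.commute)
  next
    case (Inr \<alpha>)
    then show ?thesis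
      using dS unfolding gexp by (simp add: dleft_Inr gdiff_left_scale gdiff_left_gsoul gmult_scale_right)
  qed
qed

lemma abr_gexp:
  assumes "gsmooth U X" "\<And>y. y \<in> U \<Longrightarrow> gr_supp m (X y)"
    "\<And>y. y \<in> U \<Longrightarrow> gr_parity 0 (X y)" "x \<in> U"
  shows "abr m E H (\<lambda>y. gexp m (X y)) x = gmult (abr m E H X x) (gexp m (X x))"
  unfolding abr_def by (simp add: dleft_gexp[OF assms] gmult_sum_left gmult_assoc)

end

section \<open>The commutator of the odd Laplacian with an odd function\<close>

lemma eps_cases: "eps A = 0 \<or> eps A = 1"
  by (cases A) auto

locale bv_data =
  fixes m :: nat and U :: "(real^'n::finite) set" and \<rho> :: "'n sfun"
    and E :: "'n + nat \<Rightarrow> 'n + nat \<Rightarrow> 'n sfun" and \<Psi> :: "'n sfun"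
  assumes U: "open U"
    and E_sfun: "\<And>A B. A \<in> idx m \<Longrightarrow> B \<in> idx m \<Longrightarrow> sfun m U (E A B)"
    and E_homog: "\<And>A B. A \<in> idx m \<Longrightarrow> B \<in> idx m \<Longrightarrow> homog (eps A + eps B + 1) U (E A B)"
    and E_antisym: "\<And>A B x. A \<in> idx m \<Longrightarrow> B \<in> idx m \<Longrightarrow> x \<in> U \<Longrightarrow>
        E B A x = gscale (- ((-1) ^ ((eps A + 1) * (eps B + 1)))) (E A B x)"
    and rho_sfun: "sfun m U \<rho>" and rho_homog: "homog 0 U \<rho>"
    and rho_nz: "\<And>x. x \<in> U \<Longrightarrow> \<rho> x {} \<noteq> 0"
    and Psi_sfun: "sfun m U \<Psi>" and Psi_homog: "homog 1 U \<Psi>"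
begin

lemma E_gsmooth: "A \<in> idx m \<Longrightarrow> B \<in> idx m \<Longrightarrow> gsmooth U (E A B)"
  and E_supp: "A \<in> idx m \<Longrightarrow> B \<in> idx m \<Longrightarrow> y \<in> U \<Longrightarrow> gr_supp m (E A B y)"
  and E_parity: "A \<in> idx m \<Longrightarrow> B \<in> idx m \<Longrightarrow> y \<in> U \<Longrightarrow> gr_parity (eps A + eps B + 1) (E A B y)"
  using E_sfun E_homog sfun_gsmooth sfun_gr_supp homog_iff_gr_parity by blast+

lemma rho_gsmooth: "gsmooth U \<rho>"
  and rho_supp: "y \<in> U \<Longrightarrow> gr_supp m (\<rho> y)"
  and rho_parity: "y \<in> U \<Longrightarrow> gr_parity 0 (\<rho> y)"
  using rho_sfun rho_homog sfun_gsmooth sfun_gr_supp homog_iff_gr_parity by blast+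

lemma Psi_gsmooth: "gsmooth U \<Psi>"
  and Psi_supp: "y \<in> U \<Longrightarrow> gr_supp m (\<Psi> y)"
  and Psi_parity: "y \<in> U \<Longrightarrow> gr_parity 1 (\<Psi> y)"
  using Psi_sfun Psi_homog sfun_gsmooth sfun_gr_supp homog_iff_gr_parity by blast+

lemma ginv_rho_mult: "x \<in> U \<Longrightarrow> gr_finite z \<Longrightarrow> gmult (ginv m (\<rho> x)) (gmult (\<rho> x) z) = z"
  by (simp add: gmult_assoc[symmetric] ginv_left[OF rho_supp rho_nz] gmult_gone_left)

lemma dright_Psi: "x \<in> U \<Longrightarrow> dright A \<Psi> x = dleft A \<Psi> x"
  by (cases A) (simp_all add: dleft_Inl dright_Inl dleft_Inr dright_Inr fun_eq_iff
      gdiff_right_eq_left[OF Psi_parity Psi_supp])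

lemma gsmooth_Lap_Psi: "gsmooth U (Lap m \<rho> E \<Psi>)"
  by (rule gsmooth_Lap[OF U E_gsmooth rho_gsmooth rho_nz Psi_gsmooth])

definition flux :: "'n sfun \<Rightarrow> 'n + nat \<Rightarrow> 'n + nat \<Rightarrow> 'n sfun" where
  "flux G A B = (\<lambda>y. gmult (\<rho> y) (gmult (E A B y) (dleft B G y)))"

lemma Lap_flux:
  "Lap m \<rho> E G x = gmult (ginv m (\<rho> x))
     (\<Sum>A\<in>idx m. \<Sum>B\<in>idx m. gscale ((-1) ^ eps A / 2) (dleft A (flux G A B) x))"
  by (simp add: Lap_def flux_def)

lemma gsmooth_flux: "gsmooth U G \<Longrightarrow> A \<in> idx m \<Longrightarrow> B \<in> idx m \<Longrightarrow> gsmooth U (flux G A B)"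
  unfolding flux_def by (intro gsmooth_gmult[OF U] rho_gsmooth E_gsmooth gsmooth_dleft[OF U])

lemma gr_parity_flux_Psi:
  assumes "A \<in> idx m" "B \<in> idx m" "y \<in> U"
  shows "gr_parity (eps A) (flux \<Psi> A B y)"
proof -
  have "gr_parity (0 + ((eps A + eps B + 1) + (1 + eps B))) (flux \<Psi> A B y)"
    unfolding flux_def using assms
    by (intro gr_parity_gmult rho_parity E_parity gr_parity_dleft[OF U Psi_homog Psi_supp])
  then show ?thesis by (rule iffD1[OF gr_parity_mod, rotated]) presburger
qed

lemma flux_smul:
  assumes G: "gsmooth U G" and A: "A \<in> idx m" and B: "B \<in> idx m" and y: "y \<in> U"
  shows "flux (smul \<Psi> G) A B y =
    gmult (flux \<Psi> A B y) (G y) + gscale ((-1) ^ (eps A + 1)) (gmult (\<Psi> y) (flux G A B y))"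
proof -
  have "gmult (\<rho> y) (gmult (E A B y) (gmult (\<Psi> y) z))
      = gscale ((-1) ^ (eps A + eps B + 1)) (gmult (\<Psi> y) (gmult (\<rho> y) (gmult (E A B y) z)))" for z
    using gmult_commute_parity[OF E_parity[OF A B y] Psi_parity[OF y]]
      gmult_commute_even(1)[OF rho_parity[OF y], of "\<Psi> y"]
    by (simp add: gmult_assoc[symmetric] gmult_scale_left gmult_scale_right)
  moreover have "(-1::complex) ^ eps B * (-1) ^ (eps A + eps B + 1) = (-1) ^ (eps A + 1)"
    using eps_cases[of A] eps_cases[of B] by auto
  ultimately show ?thesis
    unfolding flux_def smul_def dleft_gmult[OF U Psi_gsmooth G y Psi_parity[OF y]]
    by (simp add: gmult_add_right gmult_scale_right gmult_assoc)
qed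

lemma dleft_flux_smul:
  assumes G: "gsmooth U G" and A: "A \<in> idx m" and B: "B \<in> idx m" and x: "x \<in> U"
  shows "gscale ((-1) ^ eps A / 2) (dleft A (flux (smul \<Psi> G) A B) x) =
    gmult (gscale ((-1) ^ eps A / 2) (dleft A (flux \<Psi> A B) x)) (G x)
    + gscale (1/2) (gmult (flux \<Psi> A B x) (dleft A G x))
    - gscale (1/2) (gmult (dleft A \<Psi> x) (flux G A B x))
    - gmult (\<Psi> x) (gscale ((-1) ^ eps A / 2) (dleft A (flux G A B) x))"
proof -
  have "dleft A (flux (smul \<Psi> G) A B) x =
    dleft A (\<lambda>y. gmult (flux \<Psi> A B y) (G y) + gscale ((-1) ^ (eps A + 1)) (gmult (\<Psi> y) (flux G A B y))) x"
    by (rule dleft_local[OF U x]) (rule flux_smul[OF G A B])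
  also have "\<dots> = dleft A (\<lambda>y. gmult (flux \<Psi> A B y) (G y)) x
      + gscale ((-1) ^ (eps A + 1)) (dleft A (\<lambda>y. gmult (\<Psi> y) (flux G A B y)) x)"
    by (simp add: dleft_add[OF U] dleft_scale[OF U] gsmooth_scale[OF U] gsmooth_gmult[OF U]
        gsmooth_flux[OF _ A B] Psi_gsmooth G x)
  also have "\<dots> = gmult (dleft A (flux \<Psi> A B) x) (G x)
      + gscale ((-1) ^ (eps A * eps A)) (gmult (flux \<Psi> A B x) (dleft A G x))
      + gscale ((-1) ^ (eps A + 1)) (gmult (dleft A \<Psi> x) (flux G A B x)
        + gscale ((-1) ^ (eps A * 1)) (gmult (\<Psi> x) (dleft A (flux G A B) x)))"
    unfolding dleft_gmult[OF U gsmooth_flux[OF Psi_gsmooth A B] G x gr_parity_flux_Psi[OF A B x]]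
      dleft_gmult[OF U Psi_gsmooth gsmooth_flux[OF G A B] x Psi_parity[OF x]] ..
  finally have expand: "dleft A (flux (smul \<Psi> G) A B) x = \<dots>" .
  show ?thesis
    unfolding expand using eps_cases[of A] by (auto simp: gmult_simps fun_eq_iff algebra_simps)
qed

lemma E_dleft_Psi_commute:
  assumes A: "A \<in> idx m" and B: "B \<in> idx m" and x: "x \<in> U"
  shows "gmult (E A B x) (dleft B \<Psi> x) = gscale (-1) (gmult (dleft B \<Psi> x) (E B A x))"
proof -
  have "(-1::complex) ^ ((eps A + eps B + 1) * (1 + eps B)) * - ((-1) ^ ((eps B + 1) * (eps A + 1))) = -1"
    using eps_cases[of A] eps_cases[of B] by auto
  then show ?thesis
    unfolding gmult_commute_parity[OF E_parity[OF A B x] gr_parity_dleft[OF U Psi_homog Psi_supp[OF x] x]]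
    by (subst E_antisym[OF B A x]) (simp only: gmult_scale_right gscale_gscale)
qed

lemma sum_E_dleft_Psi_dleft:
  assumes x: "x \<in> U"
  shows "(\<Sum>A\<in>idx m. \<Sum>B\<in>idx m. gmult (gmult (E A B x) (dleft B \<Psi> x)) (dleft A G x))
    = gscale (-1) (abr m E \<Psi> G x)"
proof -
  have "(\<Sum>A\<in>idx m. \<Sum>B\<in>idx m. gmult (gmult (E A B x) (dleft B \<Psi> x)) (dleft A G x))
      = (\<Sum>A\<in>idx m. \<Sum>B\<in>idx m. gscale (-1) (gmult (gmult (dright B \<Psi> x) (E B A x)) (dleft A G x)))"
    by (intro sum.cong refl) (simp add: E_dleft_Psi_commute x dright_Psi gmult_scale_left)
  also have "\<dots> = gscale (-1) (abr m E \<Psi> G x)"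
    by (subst sum.swap) (simp add: abr_def gscale_sum)
  finally show ?thesis .
qed

text \<open>The two cross terms of the Leibniz rule each contribute half of the antibracket; the graded
  antisymmetry of \<open>E\<close> turns the one into the other.\<close>

lemma Lap_smul_Psi:
  assumes G: "gsmooth U G" and Gs: "\<And>y. y \<in> U \<Longrightarrow> gr_supp m (G y)" and x: "x \<in> U"
  shows "Lap m \<rho> E (smul \<Psi> G) x =
    gmult (Lap m \<rho> E \<Psi> x) (G x) - abr m E \<Psi> G x - gmult (\<Psi> x) (Lap m \<rho> E G x)"
proof -
  define r where "r = ginv m (\<rho> x)"
  define c where "c A = (-1::complex) ^ eps A / 2" for A :: "'n + nat"
  define S where "S X = (\<Sum>A\<in>idx m. \<Sum>B\<in>idx m. X A B :: gr)"
    for X :: "'n + nat \<Rightarrow> 'n + nat \<Rightarrow> gr"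
  define X1 where "X1 A B = gmult (gscale (c A) (dleft A (flux \<Psi> A B) x)) (G x)" for A B
  define X2 where "X2 A B = gscale (1/2) (gmult (flux \<Psi> A B x) (dleft A G x))" for A B
  define X3 where "X3 A B = gscale (1/2) (gmult (dleft A \<Psi> x) (flux G A B x))" for A B
  define X4 where "X4 A B = gmult (\<Psi> x) (gscale (c A) (dleft A (flux G A B) x))" for A B
  have r_even: "gr_parity 0 r" unfolding r_def by (rule gr_parity_ginv[OF rho_parity[OF x]])
  have r_flux: "gmult r (flux F A B x) = gmult (E A B x) (dleft B F x)"
    if "A \<in> idx m" "B \<in> idx m" "\<And>y. y \<in> U \<Longrightarrow> gr_supp m (F y)" for F A B
    unfolding r_def flux_def using that x
    by (intro ginv_rho_mult gr_supp_imp_finite[of m] gr_supp_gmult E_supp gr_supp_dleft[OF U])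
  have "Lap m \<rho> E (smul \<Psi> G) x = gmult r (S (\<lambda>A B. X1 A B + X2 A B - X3 A B - X4 A B))"
    unfolding Lap_flux S_def r_def X1_def X2_def X3_def X4_def c_def
    by (intro arg_cong[where f = "gmult _"] sum.cong refl dleft_flux_smul[OF G _ _ x])
  also have "\<dots> = gmult r (S X1) + gmult r (S X2) - gmult r (S X3) - gmult r (S X4)"
    unfolding S_def by (simp only: sum.distrib sum_subtractf gmult_add_right gmult_diff_right)
  also have "gmult r (S X1) = gmult (Lap m \<rho> E \<Psi> x) (G x)"
    unfolding Lap_flux S_def r_def X1_def c_def by (simp only: gmult_sum_left[symmetric] gmult_assoc)
  also have "gmult r (S X2) = gscale (1/2) (gscale (-1) (abr m E \<Psi> G x))"
    using r_flux[where F = \<Psi>, OF _ _ Psi_supp]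
    unfolding S_def X2_def sum_E_dleft_Psi_dleft[OF x, symmetric]
    by (simp add: gmult_sum_right gscale_sum gmult_scale_right gmult_assoc[symmetric])
  also have "gmult r (S X3) = gscale (1/2) (abr m E \<Psi> G x)"
  proof -
    have "gmult r (gmult (dleft A \<Psi> x) z) = gmult (dleft A \<Psi> x) (gmult r z)" for A z
      by (simp only: gmult_assoc[symmetric] gmult_commute_even(1)[OF r_even, of "dleft A \<Psi> x"])
    then show ?thesis
      using r_flux[where F = G, OF _ _ Gs] unfolding S_def X3_def abr_def
      by (simp add: gmult_sum_right gscale_sum gmult_scale_right dright_Psi[OF x] gmult_assoc)
  qed
  also have "gmult r (S X4) = gmult (\<Psi> x) (Lap m \<rho> E G x)"
    unfolding Lap_flux S_def r_def X4_def c_def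
    by (simp only: gmult_sum_right[symmetric] gmult_assoc[symmetric]
        gmult_commute_even(1)[OF r_even[unfolded r_def], of "\<Psi> x"])
  finally show ?thesis by (simp add: fun_eq_iff algebra_simps)
qed

theorem commLap_eq:
  assumes "gsmooth U G" "\<And>y. y \<in> U \<Longrightarrow> gr_supp m (G y)" "x \<in> U"
  shows "commLap m \<rho> E \<Psi> G x = gmult (Lap m \<rho> E \<Psi> x) (G x) - abr m E \<Psi> G x"
  using Lap_smul_Psi[OF assms] by (simp add: commLap_def smul_def)

end

section \<open>Formal power series of superfunctions\<close>

lemma gmult_zero_fun [simp]: "gmult (\<lambda>a. 0) c = 0" "gmult c (\<lambda>a. 0) = 0"
  using gmult_zero_left[of c] gmult_zero_right[of c] by (simp_all add: zero_fun_def)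

text \<open>\<open>cpow y i k\<close> is the coefficient of \<open>t\<^sup>k\<close> in \<open>(\<Sum>\<^sub>l y\<^sub>l t\<^sup>l)\<^sup>i\<close>, and \<open>cexp y k\<close>
  that of \<open>exp (\<Sum>\<^sub>l y\<^sub>l t\<^sup>l)\<close> when \<open>y 0 = 0\<close>.\<close>

fun cpow :: "(nat \<Rightarrow> gr) \<Rightarrow> nat \<Rightarrow> nat \<Rightarrow> gr" where
  "cpow y 0 k = (if k = 0 then gone else 0)"
| "cpow y (Suc i) k = (\<Sum>l\<le>k. gmult (y l) (cpow y i (k - l)))"

lemma sser_pow_cpow: "sser_pow P i n x = cpow (\<lambda>l. P l x) i n"
  by (induction i arbitrary: n) (auto simp: sser_mult_def)

lemma gr_supp_cpow: assumes "\<And>l. gr_supp m (y l)" shows "gr_supp m (cpow y i k)"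
proof (induction i arbitrary: k)
  case 0 show ?case by (simp add: gr_supp_gone gr_supp_zero)
next
  case (Suc i)
  have "gr_supp m (gmult (y l) (cpow y i (k - l)))" for l using gr_supp_gmult[OF assms Suc.IH] by simp
  then show ?case by (simp only: cpow.simps) (rule gr_supp_sum)
qed

lemma cpow_eq_0: "y 0 = 0 \<Longrightarrow> k < i \<Longrightarrow> cpow y i k = 0"
proof (induction i arbitrary: k)
  case 0 then show ?case by simp
next
  case (Suc i)
  have "gmult (y l) (cpow y i (k - l)) = 0" if "l \<le> k" for l
  proof (cases l)
    case 0 then show ?thesis using Suc by simp
  next
    case (Suc l') then show ?thesis using Suc.IH[of "k - l"] Suc.prems that by simp
  qed
  then show ?case by simp
qed

lemma sum_triangle_swap:
  fixes f :: "nat \<Rightarrow> nat \<Rightarrow> 'a::comm_monoid_add"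
  shows "(\<Sum>l\<le>k. \<Sum>l'\<le>k - l. f l l') = (\<Sum>l'\<le>k. \<Sum>l\<le>k - l'. f l l')"
proof -
  have cut: "(\<Sum>l'\<le>k - l. g l') = (\<Sum>l'\<le>k. if l + l' \<le> k then g l' else 0)"
    if "l \<le> k" for l :: nat and g :: "nat \<Rightarrow> 'a"
  proof -
    have "{l' \<in> {..k}. l + l' \<le> k} = {..k - l}" using that by auto
    then show ?thesis using sum.inter_filter[of "{..k}" g "\<lambda>l'. l + l' \<le> k"] by simp
  qed
  have "(\<Sum>l\<le>k. \<Sum>l'\<le>k - l. f l l') = (\<Sum>l\<le>k. \<Sum>l'\<le>k. if l + l' \<le> k then f l l' else 0)"
    by (rule sum.cong[OF refl]) (rule cut, simp)
  also have "\<dots> = (\<Sum>l'\<le>k. \<Sum>l\<le>k. if l + l' \<le> k then f l l' else 0)"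
    by (rule sum.swap)
  also have "\<dots> = (\<Sum>l'\<le>k. \<Sum>l\<le>k - l'. f l l')"
    by (rule sum.cong[OF refl]) (subst cut, simp, simp add: add.commute)
  finally show ?thesis .
qed

text \<open>The power rule \<open>D (y\<^sup>i) = i (D y) y\<^sup>i\<^sup>-\<^sup>1\<close> for a derivation \<open>D\<close> and even \<open>y\<close>, in coefficient form:
  \<open>Z i\<close> stands for \<open>D (y\<^sup>i)\<close> and \<open>d\<close> for \<open>D y\<close>, and \<open>ZS\<close> is the Leibniz rule.\<close>

lemma cpow_derivation:
  assumes yev: "\<And>l. gr_parity 0 (y l)"
    and Z0: "\<And>k. Z 0 k = 0"
    and ZS: "\<And>i k. Z (Suc i) k = (\<Sum>l\<le>k. gmult (d l) (cpow y i (k - l)) + gmult (y l) (Z i (k - l)))"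
  shows "Z i k = gscale (of_nat i) (\<Sum>l\<le>k. gmult (d l) (cpow y (i - 1) (k - l)))"
proof (induction i arbitrary: k)
  case 0
  then show ?case by (simp add: Z0)
next
  case (Suc i)
  have "(\<Sum>l\<le>k. gmult (y l) (Z i (k - l))) = gscale (of_nat i)
      (\<Sum>l\<le>k. \<Sum>l'\<le>k - l. gmult (y l) (gmult (d l') (cpow y (i - 1) (k - l - l'))))"
    by (simp add: Suc.IH gmult_scale_right gmult_sum_right gscale_sum)
  also have "(\<Sum>l\<le>k. \<Sum>l'\<le>k - l. gmult (y l) (gmult (d l') (cpow y (i - 1) (k - l - l'))))
      = (\<Sum>l'\<le>k. \<Sum>l\<le>k - l'. gmult (y l) (gmult (d l') (cpow y (i - 1) (k - l - l'))))"
    by (rule sum_triangle_swap)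
  also have "\<dots> = (\<Sum>l'\<le>k. gmult (d l') (\<Sum>l\<le>k - l'. gmult (y l) (cpow y (i - 1) (k - l' - l))))"
  proof -
    have "gmult (y l) (gmult (d l') z) = gmult (d l') (gmult (y l) z)" for l l' z
      by (simp only: gmult_assoc[symmetric] gmult_commute_even(1)[OF yev[of l], of "d l'"])
    then show ?thesis by (simp add: gmult_sum_right add.commute)
  qed
  finally have sum_yZ: "(\<Sum>l\<le>k. gmult (y l) (Z i (k - l))) =
      gscale (of_nat i) (\<Sum>l'\<le>k. gmult (d l') (\<Sum>l\<le>k - l'. gmult (y l) (cpow y (i - 1) (k - l' - l))))" .
  have "gscale (of_nat i) (\<Sum>l'\<le>k. gmult (d l') (\<Sum>l\<le>k - l'. gmult (y l) (cpow y (i - 1) (k - l' - l))))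
      = gscale (of_nat i) (\<Sum>l'\<le>k. gmult (d l') (cpow y i (k - l')))"
    by (cases i) simp_all
  then have "Z (Suc i) k = (\<Sum>l\<le>k. gmult (d l) (cpow y i (k - l)))
      + gscale (of_nat i) (\<Sum>l\<le>k. gmult (d l) (cpow y i (k - l)))"
    using sum_yZ by (simp add: ZS sum.distrib)
  also have "\<dots> = gscale (of_nat (Suc i)) (\<Sum>l\<le>k. gmult (d l) (cpow y (Suc i - 1) (k - l)))"
    by (rule ext) (simp add: algebra_simps)
  finally show ?case .
qed

definition cexp :: "(nat \<Rightarrow> gr) \<Rightarrow> nat \<Rightarrow> gr" where
  "cexp y j = (\<Sum>i\<le>j. gscale (1 / fact i) (cpow y i j))"

text \<open>The chain rule \<open>D (exp y) = (D y) exp y\<close>, in the same coefficient form.\<close>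

lemma cexp_derivation:
  assumes yev: "\<And>l. gr_parity 0 (y l)" and y0: "y 0 = 0" and d0: "d 0 = 0"
    and Z0: "\<And>k. Z 0 k = 0"
    and ZS: "\<And>i k. Z (Suc i) k = (\<Sum>l\<le>k. gmult (d l) (cpow y i (k - l)) + gmult (y l) (Z i (k - l)))"
  shows "(\<Sum>i\<le>k. gscale (1 / fact i) (Z i k)) = (\<Sum>l\<le>k. gmult (d l) (cexp y (k - l)))"
proof (cases k)
  case 0
  then show ?thesis by (simp add: Z0 d0)
next
  case (Suc n)
  have Z: "Z (Suc j) k = gscale (of_nat (Suc j)) (\<Sum>l\<le>k. gmult (d l) (cpow y j (k - l)))" for j
    using cpow_derivation[of y Z d, OF yev Z0 ZS] by simp
  have "(\<Sum>i\<le>k. gscale (1 / fact i) (Z i k)) = (\<Sum>j\<le>n. gscale (1 / fact (Suc j)) (Z (Suc j) k))"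
    unfolding Suc sum.atMost_Suc_shift by (simp add: Z0)
  also have "\<dots> = (\<Sum>j\<le>n. \<Sum>l\<le>k. gmult (d l) (gscale (1 / fact j) (cpow y j (k - l))))"
    unfolding Z gscale_fact_Suc by (simp only: gscale_sum gmult_scale_right)
  also have "\<dots> = (\<Sum>l\<le>k. \<Sum>j\<le>n. gmult (d l) (gscale (1 / fact j) (cpow y j (k - l))))"
    by (rule sum.swap)
  also have "\<dots> = (\<Sum>l\<le>k. gmult (d l) (cexp y (k - l)))"
  proof (intro sum.cong refl)
    fix l assume "l \<in> {..k}"
    show "(\<Sum>j\<le>n. gmult (d l) (gscale (1 / fact j) (cpow y j (k - l)))) = gmult (d l) (cexp y (k - l))"
    proof (cases l)
      case (Suc l')
      then have "{..k - l} \<subseteq> {..n}" using \<open>k = Suc n\<close> by auto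
      then have "(\<Sum>j\<le>n. gmult (d l) (gscale (1 / fact j) (cpow y j (k - l))))
          = (\<Sum>j\<le>k - l. gmult (d l) (gscale (1 / fact j) (cpow y j (k - l))))"
        by (intro sum.mono_neutral_right) (auto simp: cpow_eq_0[of y, OF y0])
      then show ?thesis by (simp add: cexp_def gmult_sum_right)
    qed (simp add: d0)
  qed
  finally show ?thesis .
qed

lemma cexp_euler:
  assumes yev: "\<And>l. gr_parity 0 (y l)" and y0: "y 0 = 0"
  shows "gscale (of_nat k) (cexp y k) = (\<Sum>l\<le>k. gmult (gscale (of_nat l) (y l)) (cexp y (k - l)))"
proof -
  define Z where "Z i k = gscale (of_nat k) (cpow y i k)" for i k
  have ZS: "Z (Suc i) k = (\<Sum>l\<le>k. gmult (gscale (of_nat l) (y l)) (cpow y i (k - l)) + gmult (y l) (Z i (k - l)))"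
    for i k
  proof -
    have "gscale (of_nat k) (gmult (y l) (cpow y i (k - l))) =
        gmult (gscale (of_nat l) (y l)) (cpow y i (k - l)) + gmult (y l) (Z i (k - l))" if "l \<le> k" for l
    proof -
      have "(of_nat k :: complex) = of_nat l + of_nat (k - l)" using that by (simp add: of_nat_diff)
      then show ?thesis unfolding Z_def by (simp add: gmult_scale_left gmult_scale_right gscale_add_left)
    qed
    then show ?thesis unfolding Z_def cpow.simps gscale_sum by (intro sum.cong) simp_all
  qed
  have "gscale (of_nat k) (cexp y k) = (\<Sum>i\<le>k. gscale (1 / fact i) (Z i k))"
    by (simp add: Z_def cexp_def gscale_sum mult.commute)
  also have "\<dots> = (\<Sum>l\<le>k. gmult (gscale (of_nat l) (y l)) (cexp y (k - l)))"
    by (rule cexp_derivation[OF yev y0 _ _ ZS]) (simp_all add: Z_def fun_eq_iff)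
  finally show ?thesis .
qed

definition nonconst :: "(nat \<Rightarrow> 'n sfun) \<Rightarrow> nat \<Rightarrow> 'n sfun" where
  "nonconst X = (\<lambda>j. if j = 0 then (\<lambda>_. 0) else X j)"

lemma sser_exp_cexp: "sser_exp m X n y = gmult (gexp m (X 0 y)) (cexp (\<lambda>l. nonconst X l y) n)"
  unfolding sser_exp_def cexp_def nonconst_def sser_pow_cpow by simp

lemma nonconst_0: "nonconst X 0 y = 0"
  and nonconst_Suc: "l \<noteq> 0 \<Longrightarrow> nonconst X l = X l"
  by (simp_all add: nonconst_def)

lemma gr_parity_nonconst: "gr_parity 0 (X l y) \<Longrightarrow> gr_parity 0 (nonconst X l y)"
  by (simp add: nonconst_def gr_parity_zero zero_fun_def[symmetric])

lemma sser_exp_euler: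
  assumes p: "\<And>l. gr_parity 0 (X l x)"
  shows "gscale (of_nat k) (sser_exp m X k x) = (\<Sum>l\<le>k. gscale (of_nat l) (gmult (X l x) (sser_exp m X (k - l) x)))"
proof -
  define y where "y = (\<lambda>l. nonconst X l x)"
  define g where "g = gexp m (X 0 x)"
  have yev: "gr_parity 0 (y l)" for l unfolding y_def by (rule gr_parity_nonconst[of X l x, OF p])
  have y0: "y 0 = 0" unfolding y_def by (rule nonconst_0)
  have g_comm: "gmult g (gmult (gscale (of_nat l) (y l)) z) = gscale (of_nat l) (gmult (y l) (gmult g z))" for l z
    unfolding g_def gmult_scale_left gmult_scale_right
    by (simp only: gmult_assoc[symmetric] gmult_commute_even(1)[OF gr_parity_gexp[OF p], where b = "y l"])
  have "gscale (of_nat k) (sser_exp m X k x) = gmult g (gscale (of_nat k) (cexp y k))"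
    by (simp add: sser_exp_cexp g_def y_def gmult_scale_right)
  also have "\<dots> = (\<Sum>l\<le>k. gscale (of_nat l) (gmult (y l) (gmult g (cexp y (k - l)))))"
    unfolding cexp_euler[of y, OF yev y0] by (simp add: gmult_sum_right g_comm)
  also have "\<dots> = (\<Sum>l\<le>k. gscale (of_nat l) (gmult (X l x) (sser_exp m X (k - l) x)))"
    by (intro sum.cong refl) (simp add: y_def nonconst_def sser_exp_cexp g_def)
  finally show ?thesis .
qed

context
  fixes U :: "(real^'n::finite) set"
  assumes U: "open U"
begin

lemma gsmooth_nonconst: "(\<And>j. gsmooth U (X j)) \<Longrightarrow> gsmooth U (nonconst X j)"
  by (simp add: nonconst_def gsmooth_const)

lemma gsmooth_sser_pow: "(\<And>j. gsmooth U (R j)) \<Longrightarrow> gsmooth U (sser_pow R i k)"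
proof (induction i arbitrary: k)
  case 0
  show ?case by (cases "k = 0") (simp_all add: gsmooth_const)
next
  case (Suc i)
  then show ?case by (simp add: sser_mult_def) (intro gsmooth_sum[OF U] gsmooth_gmult[OF U])
qed

lemma sser_exp_nonconst:
  "sser_exp m X k = (\<lambda>y. gmult (gexp m (X 0 y)) (\<Sum>i\<le>k. gscale (1 / fact i) (sser_pow (nonconst X) i k y)))"
  by (simp add: sser_exp_def nonconst_def)

lemma gsmooth_sser_exp: "(\<And>j. gsmooth U (X j)) \<Longrightarrow> gsmooth U (sser_exp m X n)"
  unfolding sser_exp_nonconst
  by (intro gsmooth_gmult[OF U] gsmooth_gexp[OF U] gsmooth_sum[OF U] gsmooth_scale[OF U]
      gsmooth_sser_pow gsmooth_nonconst)

lemma abr_exp_series: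
  assumes R: "\<And>j. gsmooth U (R j)" and Rp: "\<And>j. gr_parity 0 (R j x)" and R0: "\<And>y. R 0 y = 0"
    and x: "x \<in> U"
  shows "abr m E H (\<lambda>z. \<Sum>i\<le>k. gscale (1 / fact i) (sser_pow R i k z)) x =
    (\<Sum>l\<le>k. gmult (abr m E H (R l) x) (cexp (\<lambda>l. R l x) (k - l)))"
proof -
  define Z where "Z i k = abr m E H (sser_pow R i k) x" for i k
  have ZS: "Z (Suc i) k = (\<Sum>l\<le>k. gmult (abr m E H (R l) x) (cpow (\<lambda>l. R l x) i (k - l))
      + gmult (R l x) (Z i (k - l)))" for i k
  proof -
    have "Z (Suc i) k = (\<Sum>l\<le>k. abr m E H (\<lambda>y. gmult (R l y) (sser_pow R i (k - l) y)) x)"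
      unfolding Z_def sser_pow.simps sser_mult_def
      by (rule abr_sum[OF U]) (auto intro!: gsmooth_gmult[OF U] R gsmooth_sser_pow x)
    then show ?thesis
      unfolding Z_def sser_pow_cpow[symmetric] by (simp add: abr_gmult[OF U R gsmooth_sser_pow[OF R] x Rp])
  qed
  have "abr m E H (\<lambda>z. \<Sum>i\<le>k. gscale (1 / fact i) (sser_pow R i k z)) x = (\<Sum>i\<le>k. gscale (1 / fact i) (Z i k))"
    unfolding Z_def by (simp add: abr_sum[OF U] abr_scale[OF U] gsmooth_scale[OF U] gsmooth_sser_pow[OF R] x)
  also have "\<dots> = (\<Sum>l\<le>k. gmult (abr m E H (R l) x) (cexp (\<lambda>l. R l x) (k - l)))"
  proof (rule cexp_derivation[OF Rp _ _ _ ZS])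
    have "R 0 = (\<lambda>_. 0)" using R0 by (simp add: fun_eq_iff)
    then show "abr m E H (R 0) x = 0" by (simp add: abr_zero[OF U])
    show "Z 0 j = 0" for j by (cases "j = 0") (simp_all add: Z_def abr_zero[OF U] abr_gone[OF U])
  qed (simp add: R0 fun_eq_iff)
  finally show ?thesis .
qed

lemma abr_sser_exp:
  assumes X: "\<And>j. gsmooth U (X j)" and Xs: "\<And>j y. y \<in> U \<Longrightarrow> gr_supp m (X j y)"
    and Xp: "\<And>j y. y \<in> U \<Longrightarrow> gr_parity 0 (X j y)" and x: "x \<in> U"
  shows "abr m E H (sser_exp m X k) x = (\<Sum>l\<le>k. gmult (abr m E H (X l) x) (sser_exp m X (k - l) x))"
proof -
  define R where "R = nonconst X"
  define g where "g = gexp m (X 0 x)"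
  define T where "T = (\<lambda>z. \<Sum>i\<le>k. gscale (1 / fact i) (sser_pow R i k z))"
  define d where "d l = abr m E H (R l) x" for l
  have R: "\<And>j. gsmooth U (R j)" unfolding R_def by (rule gsmooth_nonconst[OF X])
  have T: "gsmooth U T"
    unfolding T_def by (intro gsmooth_sum[OF U] gsmooth_scale[OF U] gsmooth_sser_pow[OF R])
  have d0: "d 0 = 0" unfolding d_def R_def nonconst_def by (simp add: abr_zero[OF U])
  have g_comm: "gmult g (gmult (d l) z) = gmult (d l) (gmult g z)" for l z
    unfolding g_def
    by (simp only: gmult_assoc[symmetric] gmult_commute_even(1)[OF gr_parity_gexp[OF Xp[OF x]], where b = "d l"])
  have "abr m E H (sser_exp m X k) x = abr m E H (\<lambda>z. gmult (gexp m (X 0 z)) (T z)) x"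
    unfolding sser_exp_nonconst T_def R_def ..
  also have "\<dots> = gmult (abr m E H (\<lambda>z. gexp m (X 0 z)) x) (T x) + gmult g (abr m E H T x)"
    unfolding g_def by (rule abr_gmult[OF U gsmooth_gexp[OF U X] T x gr_parity_gexp[OF Xp[OF x]]])
  also have "abr m E H (\<lambda>z. gexp m (X 0 z)) x = gmult (abr m E H (X 0) x) g"
    unfolding g_def by (rule abr_gexp[OF U X Xs Xp x])
  also have "abr m E H T x = (\<Sum>l\<le>k. gmult (d l) (cexp (\<lambda>l. R l x) (k - l)))"
    unfolding T_def d_def
  proof (rule abr_exp_series[OF R _ _ x])
    show "gr_parity 0 (R j x)" for j unfolding R_def by (rule gr_parity_nonconst, rule Xp[OF x])
  qed (simp add: R_def nonconst_0)
  also have "gmult (gmult (abr m E H (X 0) x) g) (T x) + gmult g (\<Sum>l\<le>k. gmult (d l) (cexp (\<lambda>l. R l x) (k - l)))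
      = gmult (abr m E H (X 0) x) (sser_exp m X k x) + (\<Sum>l\<le>k. gmult (d l) (sser_exp m X (k - l) x))"
  proof -
    have "gmult g (T x) = sser_exp m X k x" by (simp add: sser_exp_nonconst g_def T_def R_def)
    moreover have "gmult g (cexp (\<lambda>l. R l x) j) = sser_exp m X j x" for j
      by (simp add: sser_exp_cexp g_def R_def)
    ultimately show ?thesis by (simp add: gmult_assoc gmult_sum_right g_comm)
  qed
  also have "\<dots> = (\<Sum>l\<le>k. gmult (abr m E H (X l) x) (sser_exp m X (k - l) x))"
  proof -
    have "gmult (abr m E H (X l) x) (sser_exp m X (k - l) x) =
        (if l = 0 then gmult (abr m E H (X 0) x) (sser_exp m X k x) else 0) + gmult (d l) (sser_exp m X (k - l) x)"
      for l by (cases "l = 0") (simp add: d0, simp add: d_def R_def nonconst_Suc)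
    then show ?thesis by (simp add: sum.distrib)
  qed
  finally show ?thesis .
qed

end

lemma gr_supp_sser_exp:
  assumes "\<And>j. gr_supp m (X j y)"
  shows "gr_supp m (sser_exp m X n y)"
proof -
  have "\<And>l. gr_supp m (nonconst X l y)"
    using assms by (auto simp: nonconst_def gr_supp_zero zero_fun_def[symmetric])
  then show ?thesis unfolding sser_exp_cexp cexp_def
    by (intro gr_supp_gmult gr_supp_gexp assms gr_supp_sum gr_supp_scale gr_supp_cpow)
qed

lemma sser_exp_0:
  assumes "gr_supp m (X 0 y)"
  shows "sser_exp m X 0 y = gexp m (X 0 y)"
  using gmult_gone_right[OF gr_supp_imp_finite[OF gr_supp_gexp[OF assms]]] unfolding sser_exp_def by simp

section \<open>Coefficients of the transformed action\<close>

context bv_data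
begin

lemma gsmooth_abr_iterate: "gsmooth U F \<Longrightarrow> gsmooth U ((abr m E \<Psi> ^^ j) F)"
  by (induction j) (auto intro: gsmooth_abr[OF U E_gsmooth] Psi_gsmooth)

lemma commLap_series_Suc:
  assumes e: "\<And>n. gsmooth U (e n)" "\<And>n y. y \<in> U \<Longrightarrow> gr_supp m (e n y)"
    and trans: "\<And>n y. y \<in> U \<Longrightarrow> e n y = gscale ((-1) ^ n / fact n) ((commLap m \<rho> E \<Psi> ^^ n) G y)"
    and x: "x \<in> U"
  shows "gscale (of_nat (Suc k)) (e (Suc k) x) = abr m E \<Psi> (e k) x - gmult (Lap m \<rho> E \<Psi> x) (e k x)"
proof -
  define c where "c = (-1::complex) ^ k * fact k"
  have iter: "(commLap m \<rho> E \<Psi> ^^ k) G y = gscale c (e k y)" if "y \<in> U" for y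
  proof -
    have "c * ((-1) ^ k / fact k) = 1"
      unfolding c_def by (simp add: power_add[symmetric] flip: mult_2)
    then show ?thesis unfolding trans[OF that] by simp
  qed
  have "(commLap m \<rho> E \<Psi> ^^ Suc k) G x = commLap m \<rho> E \<Psi> (\<lambda>y. gscale c (e k y)) x"
    unfolding funpow.simps o_def by (rule commLap_local[OF U x iter])
  also have "\<dots> = gmult (Lap m \<rho> E \<Psi> x) (gscale c (e k x)) - abr m E \<Psi> (\<lambda>y. gscale c (e k y)) x"
    by (rule commLap_eq[OF gsmooth_scale[OF U e(1)] gr_supp_scale[OF e(2)] x])
  also have "\<dots> = gscale c (gmult (Lap m \<rho> E \<Psi> x) (e k x) - abr m E \<Psi> (e k) x)"
    by (simp only: abr_scale[OF U e(1) x] gmult_scale_right gscale_diff)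
  finally have iter_Suc: "(commLap m \<rho> E \<Psi> ^^ Suc k) G x = \<dots>" .
  have coef: "of_nat (Suc k) * ((-1) ^ Suc k / fact (Suc k)) * c = -1"
    unfolding fact_Suc_divide c_def by (simp add: power_add[symmetric] flip: mult_2)
  have "gscale (of_nat (Suc k)) (e (Suc k) x) =
      gscale (of_nat (Suc k) * ((-1) ^ Suc k / fact (Suc k)) * c) (gmult (Lap m \<rho> E \<Psi> x) (e k x) - abr m E \<Psi> (e k) x)"
    unfolding trans[OF x, of "Suc k"] iter_Suc gscale_gscale mult.assoc ..
  then show ?thesis unfolding coef by (simp add: fun_eq_iff)
qed

lemma sser_exp_coeff_recursion:
  assumes X: "\<And>j. gsmooth U (X j)" "\<And>j y. y \<in> U \<Longrightarrow> gr_supp m (X j y)"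
      "\<And>j y. y \<in> U \<Longrightarrow> gr_parity 0 (X j y)"
    and trans: "\<And>n y. y \<in> U \<Longrightarrow>
      sser_exp m X n y = gscale ((-1) ^ n / fact n) ((commLap m \<rho> E \<Psi> ^^ n) G y)"
    and x: "x \<in> U"
  shows "(\<Sum>l\<le>k. gscale (of_nat (Suc l)) (gmult (X (Suc l) x) (sser_exp m X (k - l) x))) =
    (\<Sum>l\<le>k. gmult (abr m E \<Psi> (X l) x) (sser_exp m X (k - l) x)) - gmult (Lap m \<rho> E \<Psi> x) (sser_exp m X k x)"
proof -
  have "gscale (of_nat (Suc k)) (sser_exp m X (Suc k) x) =
      (\<Sum>l\<le>Suc k. gscale (of_nat l) (gmult (X l x) (sser_exp m X (Suc k - l) x)))"
    by (rule sser_exp_euler) (rule X(3)[OF x])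
  then have "(\<Sum>l\<le>k. gscale (of_nat (Suc l)) (gmult (X (Suc l) x) (sser_exp m X (k - l) x)))
      = gscale (of_nat (Suc k)) (sser_exp m X (Suc k) x)"
    unfolding sum.atMost_Suc_shift by simp
  also have "\<dots> = abr m E \<Psi> (sser_exp m X k) x - gmult (Lap m \<rho> E \<Psi> x) (sser_exp m X k x)"
    by (rule commLap_series_Suc[OF gsmooth_sser_exp[OF U X(1)] gr_supp_sser_exp[OF X(2)] trans x])
  finally show ?thesis by (simp only: abr_sser_exp[OF U X x])
qed

text \<open>The recursion is triangular: \<open>X (Suc k)\<close> enters only through the term
  \<open>(Suc k) X (Suc k) e\<^sub>0\<close>, and \<open>e\<^sub>0\<close> can be cancelled.\<close>

lemma coeffs_unique_of_recursion:
  fixes X Y e :: "nat \<Rightarrow> 'n sfun"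
  assumes rec: "\<And>k x. x \<in> U \<Longrightarrow>
      (\<Sum>l\<le>k. gscale (of_nat (Suc l)) (gmult (X (Suc l) x) (e (k - l) x))) =
      (\<Sum>l\<le>k. gmult (abr m E \<Psi> (X l) x) (e (k - l) x)) - gmult (Lap m \<rho> E \<Psi> x) (e k x)"
    and abr_Y: "\<And>l x. x \<in> U \<Longrightarrow>
      abr m E \<Psi> (Y l) x = gscale (of_nat (Suc l)) (Y (Suc l) x) + (if l = 0 then Lap m \<rho> E \<Psi> x else 0)"
    and X0: "\<And>x. x \<in> U \<Longrightarrow> X 0 x = Y 0 x"
    and cancel: "\<And>a b x. x \<in> U \<Longrightarrow> gr_finite a \<Longrightarrow> gr_finite b \<Longrightarrow>
      gmult a (e 0 x) = gmult b (e 0 x) \<Longrightarrow> a = b"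
    and fin: "\<And>l x. x \<in> U \<Longrightarrow> gr_finite (X l x)" "\<And>l x. x \<in> U \<Longrightarrow> gr_finite (Y l x)"
    and x: "x \<in> U"
  shows "X n x = Y n x"
  using x
proof (induction n arbitrary: x rule: less_induct)
  case (less n)
  show ?case
  proof (cases n)
    case (Suc k)
    have IH: "X j y = Y j y" if "j \<le> k" "y \<in> U" for j y using less.IH Suc that by simp
    have "(\<Sum>l\<le>k. gscale (of_nat (Suc l)) (gmult (X (Suc l) x) (e (k - l) x))) =
        (\<Sum>l\<le>k. gmult (abr m E \<Psi> (Y l) x) (e (k - l) x)) - gmult (Lap m \<rho> E \<Psi> x) (e k x)"
    proof -
      have "abr m E \<Psi> (X l) x = abr m E \<Psi> (Y l) x" if "l \<le> k" for l
        by (rule abr_local[OF U less.prems]) (rule IH[OF that])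
      then show ?thesis
        unfolding rec[OF less.prems] by (intro arg_cong2[where f = "(-)"] sum.cong refl) simp_all
    qed
    also have "\<dots> = (\<Sum>l\<le>k. gscale (of_nat (Suc l)) (gmult (Y (Suc l) x) (e (k - l) x)))"
    proof -
      have "gmult (abr m E \<Psi> (Y l) x) (e (k - l) x) = gscale (of_nat (Suc l)) (gmult (Y (Suc l) x) (e (k - l) x))
          + (if l = 0 then gmult (Lap m \<rho> E \<Psi> x) (e k x) else 0)" for l
        by (simp add: abr_Y[OF less.prems] gmult_add_left gmult_scale_left)
      then show ?thesis by (simp add: sum.distrib)
    qed
    also have "(\<Sum>l\<le>k. gscale (of_nat (Suc l)) (gmult (Y (Suc l) x) (e (k - l) x))) =
        (\<Sum>l<k. gscale (of_nat (Suc l)) (gmult (X (Suc l) x) (e (k - l) x)))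
        + gscale (of_nat (Suc k)) (gmult (Y (Suc k) x) (e 0 x))"
      unfolding lessThan_Suc_atMost[symmetric] sum.lessThan_Suc using IH[OF _ less.prems] by simp
    finally have "gscale (of_nat (Suc k)) (gmult (X (Suc k) x) (e 0 x)) =
        gscale (of_nat (Suc k)) (gmult (Y (Suc k) x) (e 0 x))"
      unfolding lessThan_Suc_atMost[symmetric] sum.lessThan_Suc by simp
    then have "gmult (X (Suc k) x) (e 0 x) = gmult (Y (Suc k) x) (e 0 x)"
      by (rule gscale_cancel[OF of_nat_neq_0])
    then show ?thesis
      unfolding Suc by (rule cancel[OF less.prems fin(1)[OF less.prems] fin(2)[OF less.prems]])
  qed (use X0 less.prems in simp)
qed

definition transformed_W :: "complex \<Rightarrow> 'n sfun \<Rightarrow> nat \<Rightarrow> 'n sfun" where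
  "transformed_W hb W n = (\<lambda>x. gscale (1 / fact n) ((abr m E \<Psi> ^^ n) W x)
     + (if n = 0 then 0 else gscale (\<i> * hb / fact n) ((abr m E \<Psi> ^^ (n - 1)) (Lap m \<rho> E \<Psi>) x)))"

lemma abr_transformed_W:
  assumes W: "gsmooth U W" and x: "x \<in> U"
  shows "abr m E \<Psi> (transformed_W hb W n) x =
    gscale (of_nat (Suc n)) (transformed_W hb W (Suc n) x) - (if n = 0 then gscale (\<i> * hb) (Lap m \<rho> E \<Psi> x) else 0)"
proof -
  define A where "A j = (abr m E \<Psi> ^^ j) W" for j
  define B where "B j = (abr m E \<Psi> ^^ j) (Lap m \<rho> E \<Psi>)" for j
  define c where "c j = (if j = 0 then 0 else \<i> * hb / fact j)" for j
  have A: "gsmooth U (A j)" and B: "gsmooth U (B j)" for j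
    unfolding A_def B_def by (intro gsmooth_abr_iterate W gsmooth_Lap_Psi)+
  have tW: "transformed_W hb W j = (\<lambda>y. gscale (1 / fact j) (A j y) + gscale (c j) (B (j - 1) y))" for j
    by (simp add: transformed_W_def A_def B_def c_def fun_eq_iff)
  have "abr m E \<Psi> (transformed_W hb W n) x = gscale (1 / fact n) (A (Suc n) x) + gscale (c n) (B n x)"
  proof -
    have "gscale (c n) (abr m E \<Psi> (B (n - 1)) x) = gscale (c n) (B n x)"
      by (cases n) (simp_all add: c_def B_def)
    moreover have "abr m E \<Psi> (A n) x = A (Suc n) x" by (simp add: A_def)
    ultimately show ?thesis
      unfolding tW by (simp only: abr_add[OF U gsmooth_scale[OF U A] gsmooth_scale[OF U B] x]
          abr_scale[OF U A x] abr_scale[OF U B x])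
  qed
  moreover have "gscale (of_nat (Suc n)) (transformed_W hb W (Suc n) x) =
      gscale (1 / fact n) (A (Suc n) x) + gscale (\<i> * hb / fact n) (B n x)"
    unfolding tW c_def gscale_add gscale_gscale by (simp only: nat.distinct if_False fact_Suc_divide diff_Suc_1)
  ultimately show ?thesis by (cases n) (simp_all add: c_def B_def fun_eq_iff)
qed

lemma gsmooth_transformed_W:
  assumes "gsmooth U W"
  shows "gsmooth U (transformed_W hb W n)"
proof (cases n)
  case 0
  then show ?thesis using assms by (simp add: transformed_W_def)
next
  case (Suc k)
  then show ?thesis unfolding transformed_W_def
    by (simp only: nat.distinct if_False)
       (intro gsmooth_add[OF U] gsmooth_scale[OF U] gsmooth_abr_iterate gsmooth_Lap_Psi assms)
qed

lemma gr_finite_abr_iterate: "gr_finite (F x) \<Longrightarrow> gr_finite ((abr m E H ^^ k) F x)"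
  by (cases k) (simp_all add: abr_def gr_finite_sum gr_finite_gmult)

lemma gr_finite_transformed_W: "gr_finite (W x) \<Longrightarrow> gr_finite (transformed_W hb W n x)"
  unfolding transformed_W_def
  by (intro gr_finite_add gr_finite_scale gr_finite_abr_iterate)
     (simp_all add: gr_finite_zero gr_finite_scale gr_finite_abr_iterate Lap_def gr_finite_gmult)

lemma sser_exp_coeffs_unique:
  assumes X: "\<And>j. gsmooth U (X j)" "\<And>j y. y \<in> U \<Longrightarrow> gr_supp m (X j y)"
      "\<And>j y. y \<in> U \<Longrightarrow> gr_parity 0 (X j y)"
    and trans: "\<And>n y. y \<in> U \<Longrightarrow>
      sser_exp m X n y = gscale ((-1) ^ n / fact n) ((commLap m \<rho> E \<Psi> ^^ n) G y)"
    and abr_Y: "\<And>l x. x \<in> U \<Longrightarrow>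
      abr m E \<Psi> (Y l) x = gscale (of_nat (Suc l)) (Y (Suc l) x) + (if l = 0 then Lap m \<rho> E \<Psi> x else 0)"
    and X0: "\<And>x. x \<in> U \<Longrightarrow> X 0 x = Y 0 x"
    and fin_Y: "\<And>l x. x \<in> U \<Longrightarrow> gr_finite (Y l x)"
    and x: "x \<in> U"
  shows "X n x = Y n x"
proof (rule coeffs_unique_of_recursion[OF sser_exp_coeff_recursion[OF X trans] abr_Y X0 _ _ fin_Y x])
  show "a = b" if y: "y \<in> U" and "gr_finite a" "gr_finite b"
    and "gmult a (sser_exp m X 0 y) = gmult b (sser_exp m X 0 y)" for a b y
  proof -
    have "gr_supp m (X 0 y)" "gr_parity 0 (X 0 y)" using X y by auto
    then show ?thesis
      using gmult_cancel_right[OF gr_supp_gexp _ gr_parity_gexp _ that(2,3)] that(4)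
      by (simp add: sser_exp_0 gexp_empty)
  qed
qed (use X(2) in \<open>auto intro: gr_supp_imp_finite\<close>)

lemma abr_scaled_transformed_W:
  assumes hb: "hb \<noteq> 0" and W: "gsmooth U W" and x: "x \<in> U"
  shows "abr m E \<Psi> (\<lambda>y. gscale (\<i> / hb) (transformed_W hb W l y)) x =
    gscale (of_nat (Suc l)) (gscale (\<i> / hb) (transformed_W hb W (Suc l) x)) + (if l = 0 then Lap m \<rho> E \<Psi> x else 0)"
proof -
  have "abr m E \<Psi> (\<lambda>y. gscale (\<i> / hb) (transformed_W hb W l y)) x =
      gscale (\<i> / hb) (gscale (of_nat (Suc l)) (transformed_W hb W (Suc l) x)
        - (if l = 0 then gscale (\<i> * hb) (Lap m \<rho> E \<Psi> x) else 0))"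
    by (simp only: abr_scale[OF U gsmooth_transformed_W[OF W] x] abr_transformed_W[OF W x])
  also have "\<dots> = gscale (of_nat (Suc l)) (gscale (\<i> / hb) (transformed_W hb W (Suc l) x))
      + (if l = 0 then Lap m \<rho> E \<Psi> x else 0)"
    using hb by (simp add: fun_eq_iff algebra_simps)
  finally show ?thesis .
qed

end

lemma antisymplectic_bv_data:
  assumes "open U" "antisymplectic m U E"
    and "sfun m U \<rho>" "homog 0 U \<rho>" "\<forall>x\<in>U. \<rho> x {} \<noteq> 0"
    and "sfun m U \<Psi>" "homog 1 U \<Psi>"
  shows "bv_data m U \<rho> E \<Psi>"
  using assms unfolding antisymplectic_def by unfold_locales blast+


theorem proposition2p1:
  fixes m :: nat and U :: "(real^'n::finite) set"
    and \<rho> :: "'n sfun" and E :: "'n + nat \<Rightarrow> 'n + nat \<Rightarrow> 'n sfun"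
    and \<Psi> Wi :: "'n sfun" and Wf :: "nat \<Rightarrow> 'n sfun" and hb :: complex
  assumes U: "open U"
    and E: "antisymplectic m U E"
    and rho: "sfun m U \<rho>" "homog 0 U \<rho>" "\<forall>x\<in>U. \<rho> x {} \<noteq> 0"
    and nilp: "nilpotent_Lap m U \<rho> E"
    and Psi: "sfun m U \<Psi>" "homog 1 U \<Psi>"
    and hbar: "hb \<noteq> 0"
    and Wi: "sfun m U Wi" "homog 0 U Wi"
    and Wf: "\<forall>k. sfun m U (Wf k) \<and> homog 0 U (Wf k)"
    and Wf0: "\<forall>x\<in>U. Wf 0 x = Wi x"
    and trans: "\<forall>n. \<forall>x\<in>U.
        sser_exp m (\<lambda>k y. gscale (\<i> / hb) (Wf k y)) n x
        = gscale ((-1) ^ n / fact n)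
            ((commLap m \<rho> E \<Psi> ^^ n) (\<lambda>y. gexp m (gscale (\<i> / hb) (Wi y))) x)"
  shows "\<forall>n. \<forall>x\<in>U.
        Wf n x = gscale (1 / fact n) ((abr m E \<Psi> ^^ n) Wi x)
               + (if n = 0 then 0
                  else gscale (\<i> * hb / fact n) ((abr m E \<Psi> ^^ (n - 1)) (Lap m \<rho> E \<Psi>) x))"
proof -
  interpret bv_data m U \<rho> E \<Psi>
    by (rule antisymplectic_bv_data[OF U E rho Psi])
  define X where "X = (\<lambda>k y. gscale (\<i> / hb) (Wf k y))"
  define Y where "Y = (\<lambda>k y. gscale (\<i> / hb) (transformed_W hb Wi k y))"
  have W: "gsmooth U Wi" by (rule sfun_gsmooth[OF Wi(1)])
  have XY: "X n x = Y n x" if "x \<in> U" for n x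
  proof (rule sser_exp_coeffs_unique[OF _ _ _ _ _ _ _ that])
    show "gsmooth U (X j)" "\<And>y. y \<in> U \<Longrightarrow> gr_supp m (X j y)" "\<And>y. y \<in> U \<Longrightarrow> gr_parity 0 (X j y)"
      for j using Wf unfolding X_def homog_iff_gr_parity
      by (auto intro: gsmooth_scale[OF U] sfun_gsmooth gr_supp_scale sfun_gr_supp gr_parity_scale)
    show "sser_exp m X n y = gscale ((-1) ^ n / fact n)
        ((commLap m \<rho> E \<Psi> ^^ n) (\<lambda>y. gexp m (gscale (\<i> / hb) (Wi y))) y)" if "y \<in> U" for n y
      using trans that unfolding X_def by blast
    show "gr_finite (Y l y)" if "y \<in> U" for l y
      unfolding Y_def
      by (intro gr_finite_scale gr_finite_transformed_W gr_supp_imp_finite[OF sfun_gr_supp[OF Wi(1) that]])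
    show "abr m E \<Psi> (Y l) y = gscale (of_nat (Suc l)) (Y (Suc l) y) + (if l = 0 then Lap m \<rho> E \<Psi> y else 0)"
      if "y \<in> U" for l y
      unfolding Y_def by (rule abr_scaled_transformed_W[OF hbar W that])
  qed (use Wf0 in \<open>simp add: X_def Y_def transformed_W_def\<close>)
  have "Wf n x = transformed_W hb Wi n x" if "x \<in> U" for n x
  proof (rule gscale_cancel)
    show "\<i> / hb \<noteq> 0" using hbar by simp
    show "gscale (\<i> / hb) (Wf n x) = gscale (\<i> / hb) (transformed_W hb Wi n x)"
      using XY[OF that] by (simp add: X_def Y_def)
  qed
  then show ?thesis by (simp add: transformed_W_def)
qed

end
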